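(* Let $P$ be a join-semilattice with $\dim_\vee(P)=n<\infty$. The following are equivalent: (i) $P$ admits a one-to-one join-preserving map into a product of $n$ order-scattered chains; (ii) $P$ admits a one-to-one join-preserving map into a product of finitely many order-scattered chains; (iii) $\mathrm{Id}(P)$ is topologically scattered; (iv) $\mathrm{Id}(P)$ is order-scattered; (v) $\mathrm{mi}_\Delta(\mathrm{Id}(P))$ is order-scattered; (vi) the topological closure $\overline{\mathrm{mi}_\Delta(\mathrm{Id}(P))}$ is topologically scattered.
   Context: $\dim_\vee(P)$ is the least cardinal $\kappa$ such that $P$ admits a one-to-one join-preserving map into a product of $\kappa$ chains. $\mathrm{Id}(P)$ is the lattice of ideals (non-empty up-directed initial segments) of $P$ ordered by inclusion, viewed as a subspace of $\mathbf{2}^P\cong\mathcal{P}(P)$ with the product topology; closures are taken in this space. $\mathrm{mi}_\Delta(L)$ is the set of completely meet-irreducible elements of a complete lattice $L$ (elements $m$ having an upper cover $m^*$ with $z>m\Rightarrow z\geq m^*$). A poset is order-scattered if it contains no copy of $\mathbb{Q}$; a space is topologically scattered if every non-empty subset has an isolated point. *)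

theory Defs
  imports "HOL-Analysis.Analysis"
begin

definition is_chain :: "'c set \<Rightarrow> ('c \<Rightarrow> 'c \<Rightarrow> bool) \<Rightarrow> bool" where
  "is_chain C le \<longleftrightarrow>
     (\<forall>x\<in>C. le x x) \<and>
     (\<forall>x\<in>C. \<forall>y\<in>C. le x y \<and> le y x \<longrightarrow> x = y) \<and>
     (\<forall>x\<in>C. \<forall>y\<in>C. \<forall>z\<in>C. le x y \<and> le y z \<longrightarrow> le x z) \<and>
     (\<forall>x\<in>C. \<forall>y\<in>C. le x y \<or> le y x)"

definition order_scattered :: "'c set \<Rightarrow> ('c \<Rightarrow> 'c \<Rightarrow> bool) \<Rightarrow> bool" where
  "order_scattered X le \<longleftrightarrow>
     \<not> (\<exists>g :: rat \<Rightarrow> 'c. range g \<subseteq> X \<and> (\<forall>p q. p \<le> q \<longleftrightarrow> le (g p) (g q)))"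

text \<open>f is a one-to-one join-preserving map from the join-semilattice 'a into the
  product of the chains (C i, le i), i < n. The join in a chain is the maximum.\<close>
definition join_embedding ::
  "nat \<Rightarrow> (nat \<Rightarrow> 'c set) \<Rightarrow> (nat \<Rightarrow> 'c \<Rightarrow> 'c \<Rightarrow> bool) \<Rightarrow> ('a::semilattice_sup \<Rightarrow> nat \<Rightarrow> 'c) \<Rightarrow> bool" where
  "join_embedding n C le f \<longleftrightarrow>
     (\<forall>i<n. is_chain (C i) (le i)) \<and>
     (\<forall>x. \<forall>i<n. f x i \<in> C i) \<and>
     (\<forall>x y. \<forall>i<n. f (sup x y) i = (if le i (f x i) (f y i) then f y i else f x i)) \<and>
     (\<forall>x y. (\<forall>i<n. f x i = f y i) \<longrightarrow> x = y)"

text \<open>Chains are taken with carriers in the type 'a of P: this is no loss,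
  since the image of P in each chain is a subchain of cardinality at most |P|.\<close>
definition embeds_in_chains :: "'a::semilattice_sup itself \<Rightarrow> nat \<Rightarrow> bool" where
  "embeds_in_chains _ n \<longleftrightarrow>
     (\<exists>(C :: nat \<Rightarrow> 'a set) le (f :: 'a \<Rightarrow> nat \<Rightarrow> 'a). join_embedding n C le f)"

definition embeds_in_scattered_chains :: "'a::semilattice_sup itself \<Rightarrow> nat \<Rightarrow> bool" where
  "embeds_in_scattered_chains _ n \<longleftrightarrow>
     (\<exists>(C :: nat \<Rightarrow> 'a set) le (f :: 'a \<Rightarrow> nat \<Rightarrow> 'a). join_embedding n C le f \<and>
        (\<forall>i<n. order_scattered (C i) (le i)))"

definition join_dim_eq :: "'a::semilattice_sup itself \<Rightarrow> nat \<Rightarrow> bool" where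
  "join_dim_eq T n \<longleftrightarrow> embeds_in_chains T n \<and> (\<forall>m<n. \<not> embeds_in_chains T m)"

definition Id :: "'a::semilattice_sup set set" where
  "Id = {I. I \<noteq> {} \<and> (\<forall>x\<in>I. \<forall>y. y \<le> x \<longrightarrow> y \<in> I) \<and>
            (\<forall>x\<in>I. \<forall>y\<in>I. \<exists>z\<in>I. x \<le> z \<and> y \<le> z)}"

definition mi_Delta :: "'b set set \<Rightarrow> 'b set set" where
  "mi_Delta L = {m\<in>L. \<exists>m'\<in>L. m \<subset> m' \<and> (\<forall>z\<in>L. m \<subset> z \<longrightarrow> m' \<subseteq> z)}"

text \<open>The space 2^P with the product topology; subsets correspond to characteristic functions.\<close>
definition cantor_top :: "('b \<Rightarrow> bool) topology" where
  "cantor_top = product_topology (\<lambda>_. discrete_topology UNIV) UNIV"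

definition chi :: "'b set \<Rightarrow> 'b \<Rightarrow> bool" where
  "chi S = (\<lambda>x. x \<in> S)"

definition top_scattered :: "'t topology \<Rightarrow> 't set \<Rightarrow> bool" where
  "top_scattered T A \<longleftrightarrow>
     (\<forall>S\<subseteq>A. S \<noteq> {} \<longrightarrow> (\<exists>x\<in>S. \<exists>U. openin T U \<and> U \<inter> S = {x}))"

end

theory Submission
  imports Defs
begin

definition cylinder :: "'b set \<Rightarrow> 'b set \<Rightarrow> ('b \<Rightarrow> bool) set" where
  "cylinder F G = {h. (\<forall>x\<in>F. h x) \<and> (\<forall>x\<in>G. \<not> h x)}"

lemma topspace_cantor_top [simp]: "topspace cantor_top = UNIV"
  by (simp add: cantor_top_def)

lemma openin_cylinder:
  assumes "finite F" "finite G"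
  shows "openin cantor_top (cylinder F G)"
  unfolding cantor_top_def openin_product_topology_alt
proof
  fix h assume h: "h \<in> cylinder F G"
  define U where "U i = (if i \<in> F \<union> G then {h i} else UNIV)" for i
  have "{i. U i \<noteq> UNIV} \<subseteq> F \<union> G"
    by (auto simp: U_def)
  then have "finite {i. U i \<noteq> UNIV}"
    using assms finite_subset by auto
  moreover have "h \<in> Pi\<^sub>E UNIV U" "Pi\<^sub>E UNIV U \<subseteq> cylinder F G"
    using h by (auto simp: U_def cylinder_def PiE_def Pi_def)
  ultimately show "\<exists>U. finite {i \<in> UNIV. U i \<noteq> topspace (discrete_topology UNIV)} \<and>
      (\<forall>i\<in>UNIV. openin (discrete_topology UNIV) (U i)) \<and> h \<in> Pi\<^sub>E UNIV U \<and> Pi\<^sub>E UNIV U \<subseteq> cylinder F G"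
    by auto
qed

lemma openin_cantor_topE:
  assumes "openin cantor_top U" "h \<in> U"
  obtains F G where "finite F" "finite G" "h \<in> cylinder F G" "cylinder F G \<subseteq> U"
proof -
  obtain V where V: "finite {i. V i \<noteq> UNIV}" "h \<in> Pi\<^sub>E UNIV V" "Pi\<^sub>E UNIV V \<subseteq> U"
    using assms unfolding cantor_top_def openin_product_topology_alt by auto
  define J where "J = {i. V i \<noteq> UNIV}"
  have "k \<in> Pi\<^sub>E UNIV V" if "k \<in> cylinder {i\<in>J. h i} {i\<in>J. \<not> h i}" for k
  proof -
    have "k i \<in> V i" for i
    proof (cases "i \<in> J")
      case True
      then have "k i = h i"
        using that by (cases "h i") (auto simp: cylinder_def)
      then show ?thesis
        using V(2) by auto
    qed (simp add: J_def)
    then show ?thesis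
      by auto
  qed
  then have "cylinder {i\<in>J. h i} {i\<in>J. \<not> h i} \<subseteq> U"
    using V(3) by blast
  moreover have "finite {i\<in>J. h i}" "finite {i\<in>J. \<not> h i}"
    using V(1) by (simp_all add: J_def)
  ultimately show thesis
    using that by (simp add: cylinder_def)
qed

lemma chi_in_cylinder_iff [simp]: "chi A \<in> cylinder F G \<longleftrightarrow> F \<subseteq> A \<and> G \<inter> A = {}"
  by (auto simp: chi_def cylinder_def)

lemma chi_eq_iff [simp]: "chi A = chi B \<longleftrightarrow> A = B"
  by (auto simp: chi_def fun_eq_iff)

lemma chi_Collect [simp]: "chi (Collect h) = h"
  by (simp add: chi_def)

definition set_closure :: "'b set set \<Rightarrow> 'b set set" where
  "set_closure \<X> = {A. chi A \<in> cantor_top closure_of (chi ` \<X>)}"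

lemma closure_of_chi_image: "cantor_top closure_of (chi ` \<X>) = chi ` set_closure \<X>"
proof
  show "cantor_top closure_of (chi ` \<X>) \<subseteq> chi ` set_closure \<X>"
  proof
    fix h assume "h \<in> cantor_top closure_of (chi ` \<X>)"
    then have "Collect h \<in> set_closure \<X>"
      by (simp add: set_closure_def)
    then show "h \<in> chi ` set_closure \<X>"
      using image_eqI[of h chi "Collect h"] by simp
  qed
qed (auto simp: set_closure_def)

lemma in_set_closure_iff:
  "A \<in> set_closure \<X> \<longleftrightarrow>
     (\<forall>F G. finite F \<longrightarrow> finite G \<longrightarrow> F \<subseteq> A \<longrightarrow> G \<inter> A = {} \<longrightarrow> (\<exists>B\<in>\<X>. F \<subseteq> B \<and> G \<inter> B = {}))"
proof
  assume A: "A \<in> set_closure \<X>"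
  show "\<forall>F G. finite F \<longrightarrow> finite G \<longrightarrow> F \<subseteq> A \<longrightarrow> G \<inter> A = {} \<longrightarrow> (\<exists>B\<in>\<X>. F \<subseteq> B \<and> G \<inter> B = {})"
  proof (intro allI impI)
    fix F G assume "finite F" "finite G" "F \<subseteq> A" "G \<inter> A = {}"
    then have "chi A \<in> cylinder F G" "openin cantor_top (cylinder F G)"
      by (simp_all add: openin_cylinder)
    then obtain B where "B \<in> \<X>" "chi B \<in> cylinder F G"
      using A unfolding set_closure_def in_closure_of by blast
    then show "\<exists>B\<in>\<X>. F \<subseteq> B \<and> G \<inter> B = {}"
      by auto
  qed
next
  assume H: "\<forall>F G. finite F \<longrightarrow> finite G \<longrightarrow> F \<subseteq> A \<longrightarrow> G \<inter> A = {} \<longrightarrow> (\<exists>B\<in>\<X>. F \<subseteq> B \<and> G \<inter> B = {})"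
  have "\<exists>y\<in>chi ` \<X>. y \<in> U" if U: "openin cantor_top U" "chi A \<in> U" for U
  proof -
    obtain F G where "finite F" "finite G" "chi A \<in> cylinder F G" "cylinder F G \<subseteq> U"
      using openin_cantor_topE[OF U] .
    moreover obtain B where "B \<in> \<X>" "F \<subseteq> B" "G \<inter> B = {}"
      using H[rule_format, of F G] calculation by auto
    ultimately have "chi B \<in> U"
      by (meson chi_in_cylinder_iff subsetD)
    then show ?thesis
      using \<open>B \<in> \<X>\<close> by blast
  qed
  then show "A \<in> set_closure \<X>"
    unfolding set_closure_def in_closure_of by auto
qed

lemma subset_set_closure: "\<X> \<subseteq> set_closure \<X>"
proof
  fix A assume "A \<in> \<X>"
  then have "chi A \<in> chi ` \<X>"
    by (rule imageI)
  then show "A \<in> set_closure \<X>"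
    using closure_of_subset[of "chi ` \<X>" cantor_top] unfolding set_closure_def by auto
qed

lemma set_closure_mono: "\<X> \<subseteq> \<Y> \<Longrightarrow> set_closure \<X> \<subseteq> set_closure \<Y>"
  unfolding set_closure_def by (metis (no_types, lifting) Collect_mono closure_of_mono image_mono subsetD)

lemma Union_chain_in_set_closure:
  assumes "chain\<^sub>\<subseteq> \<C>" "\<C> \<noteq> {}" "\<C> \<subseteq> \<X>"
  shows "\<Union>\<C> \<in> set_closure \<X>"
  unfolding in_set_closure_iff
proof (intro allI impI)
  fix F G assume "finite F" "finite G" "F \<subseteq> \<Union>\<C>" "G \<inter> \<Union>\<C> = {}"
  moreover have "subset.chain UNIV \<C>"
    using assms(1) by (simp add: chain_subset_alt_def)
  ultimately obtain B where "B \<in> \<C>" "F \<subseteq> B"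
    using finite_subset_Union_chain assms(2) by metis
  then show "\<exists>B\<in>\<X>. F \<subseteq> B \<and> G \<inter> B = {}"
    using \<open>G \<inter> \<Union>\<C> = {}\<close> assms(3) by blast
qed

lemma Inter_chain_in_set_closure:
  assumes "chain\<^sub>\<subseteq> \<C>" "\<C> \<noteq> {}" "\<C> \<subseteq> \<X>"
  shows "\<Inter>\<C> \<in> set_closure \<X>"
  unfolding in_set_closure_iff
proof (intro allI impI)
  fix F G assume "finite F" "finite G" "F \<subseteq> \<Inter>\<C>" "G \<inter> \<Inter>\<C> = {}"
  have "subset.chain UNIV (uminus ` \<C>)"
    using assms(1) unfolding chain_subset_alt_def[symmetric] chain_subset_def by blast
  moreover have "G \<subseteq> \<Union>(uminus ` \<C>)" "uminus ` \<C> \<noteq> {}"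
    using \<open>G \<inter> \<Inter>\<C> = {}\<close> assms(2) by blast+
  ultimately obtain B' where "B' \<in> uminus ` \<C>" "G \<subseteq> B'"
    using finite_subset_Union_chain[OF \<open>finite G\<close>] by metis
  then obtain B where "B \<in> \<C>" "G \<inter> B = {}"
    by blast
  moreover have "F \<subseteq> B"
    using \<open>F \<subseteq> \<Inter>\<C>\<close> \<open>B \<in> \<C>\<close> by blast
  ultimately show "\<exists>B\<in>\<X>. F \<subseteq> B \<and> G \<inter> B = {}"
    using assms(3) by blast
qed

text \<open>Two sets of the closure are separated by a member of \<open>\<X>\<close>: this is all that is used of the topology.\<close>
lemma set_closure_separate:
  assumes "A \<in> set_closure \<X>" "x \<in> A" "y \<notin> A"
  obtains B where "B \<in> \<X>" "x \<in> B" "y \<notin> B"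
proof -
  have "\<exists>B\<in>\<X>. {x} \<subseteq> B \<and> {y} \<inter> B = {}"
    using assms in_set_closure_iff[THEN iffD1, rule_format, of A \<X> "{x}" "{y}"] by simp
  then show thesis
    using that by blast
qed

lemma chain_set_closure:
  assumes "chain\<^sub>\<subseteq> \<X>"
  shows "chain\<^sub>\<subseteq> (set_closure \<X>)"
  unfolding chain_subset_def
proof (intro ballI, rule ccontr)
  fix A B assume "A \<in> set_closure \<X>" "B \<in> set_closure \<X>" "\<not> (A \<subseteq> B \<or> B \<subseteq> A)"
  then obtain x y where "x \<in> A" "x \<notin> B" "y \<in> B" "y \<notin> A"
    by blast
  obtain A' where "A' \<in> \<X>" "x \<in> A'" "y \<notin> A'"
    using set_closure_separate \<open>A \<in> set_closure \<X>\<close> \<open>x \<in> A\<close> \<open>y \<notin> A\<close> .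
  moreover obtain B' where "B' \<in> \<X>" "y \<in> B'" "x \<notin> B'"
    using set_closure_separate \<open>B \<in> set_closure \<X>\<close> \<open>y \<in> B\<close> \<open>x \<notin> B\<close> .
  ultimately show False
    using assms unfolding chain_subset_def by blast
qed

lemma order_scattered_subset_iff:
  "order_scattered \<X> (\<subseteq>) \<longleftrightarrow> \<not> (\<exists>g :: rat \<Rightarrow> 'b set. range g \<subseteq> \<X> \<and> strict_mono g)"
proof -
  have "(\<forall>p q. p \<le> q \<longleftrightarrow> g p \<subseteq> g q) \<longleftrightarrow> strict_mono g" for g :: "rat \<Rightarrow> 'b set"
  proof
    assume "\<forall>p q. p \<le> q \<longleftrightarrow> g p \<subseteq> g q"
    then show "strict_mono g"
      by (intro strict_monoI) (meson less_le_not_le psubset_eq)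
  qed (metis strict_mono_less_eq)
  then show ?thesis
    unfolding order_scattered_def by auto
qed

lemma order_scattered_subset: "order_scattered \<Y> le \<Longrightarrow> \<X> \<subseteq> \<Y> \<Longrightarrow> order_scattered \<X> le"
  unfolding order_scattered_def by blast

locale dense_unbounded =
  fixes S :: "'c set" and lt :: "'c \<Rightarrow> 'c \<Rightarrow> bool"
  assumes nonempty: "S \<noteq> {}"
    and trans: "\<And>x y z. x \<in> S \<Longrightarrow> y \<in> S \<Longrightarrow> z \<in> S \<Longrightarrow> lt x y \<Longrightarrow> lt y z \<Longrightarrow> lt x z"
    and dense: "\<And>x y. x \<in> S \<Longrightarrow> y \<in> S \<Longrightarrow> lt x y \<Longrightarrow> \<exists>z\<in>S. lt x z \<and> lt z y"
    and no_top: "\<And>x. x \<in> S \<Longrightarrow> \<exists>y\<in>S. lt x y"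
    and no_bot: "\<And>x. x \<in> S \<Longrightarrow> \<exists>y\<in>S. lt y x"
begin

text \<open>Cantor's forth argument: \<open>r\<close> enumerates the rationals, and the \<open>k\<close>-th point is placed
  relative to the points already chosen exactly as \<open>r k\<close> lies relative to \<open>r 0, \<dots>, r (k - 1)\<close>.\<close>
definition forth_fits :: "(nat \<Rightarrow> rat) \<Rightarrow> 'c list \<Rightarrow> 'c \<Rightarrow> bool" where
  "forth_fits r xs s \<longleftrightarrow> s \<in> S \<and>
     (\<forall>j<length xs. (r j < r (length xs) \<longrightarrow> lt (xs ! j) s) \<and> (r (length xs) < r j \<longrightarrow> lt s (xs ! j)))"

primrec forth_seq :: "(nat \<Rightarrow> rat) \<Rightarrow> nat \<Rightarrow> 'c list" where
  "forth_seq r 0 = []"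
| "forth_seq r (Suc k) = forth_seq r k @ [SOME s. forth_fits r (forth_seq r k) s]"

lemma length_forth_seq [simp]: "length (forth_seq r k) = k"
  by (induction k) auto

lemma forth_seq_nth: "j < k \<Longrightarrow> forth_seq r k ! j = forth_seq r (Suc j) ! j"
  by (induction k) (auto simp: nth_append less_Suc_eq)

lemma forth_step:
  assumes "inj r" "set xs \<subseteq> S"
    and mono: "\<forall>i<length xs. \<forall>j<length xs. r i < r j \<longrightarrow> lt (xs ! i) (xs ! j)"
  shows "\<exists>s. forth_fits r xs s"
proof -
  define k where "k = length xs"
  define L where "L = {j. j < k \<and> r j < r k}"
  define U where "U = {j. j < k \<and> r k < r j}"
  have in_S: "xs ! j \<in> S" if "j < k" for j
    using assms(2) that by (auto simp: k_def)
  have LU: "lt (xs ! i) (xs ! j)" if "i \<in> L" "j \<in> U" for i j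
    using mono that by (auto simp: L_def U_def k_def)
  have L_max: "\<exists>a\<in>L. \<forall>j\<in>L. j \<noteq> a \<longrightarrow> lt (xs ! j) (xs ! a)" if "L \<noteq> {}"
  proof -
    have "Max (r ` L) \<in> r ` L"
      using that by (intro Max_in) (auto simp: L_def)
    then obtain a where a: "a \<in> L" "r a = Max (r ` L)"
      by (metis imageE)
    have "r j < r a" if "j \<in> L" "j \<noteq> a" for j
    proof -
      have "r j \<le> r a"
        using Max_ge[of "r ` L" "r j"] a(2) that(1) by (simp add: L_def)
      moreover have "r j \<noteq> r a"
        using \<open>inj r\<close> that(2) by (metis injD)
      ultimately show ?thesis
        by simp
    qed
    then show ?thesis
      using a(1) mono by (auto simp: L_def k_def)
  qed
  have U_min: "\<exists>b\<in>U. \<forall>j\<in>U. j \<noteq> b \<longrightarrow> lt (xs ! b) (xs ! j)" if "U \<noteq> {}"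
  proof -
    have "Min (r ` U) \<in> r ` U"
      using that by (intro Min_in) (auto simp: U_def)
    then obtain b where b: "b \<in> U" "r b = Min (r ` U)"
      by (metis imageE)
    have "r b < r j" if "j \<in> U" "j \<noteq> b" for j
    proof -
      have "r b \<le> r j"
        using Min_le[of "r ` U" "r j"] b(2) that(1) by (simp add: U_def)
      moreover have "r j \<noteq> r b"
        using \<open>inj r\<close> that(2) by (metis injD)
      ultimately show ?thesis
        by simp
    qed
    then show ?thesis
      using b(1) mono by (auto simp: U_def k_def)
  qed
  have above_L: "\<forall>j\<in>L. lt (xs ! j) s"
    if "s \<in> S" "a \<in> L" "\<forall>j\<in>L. j \<noteq> a \<longrightarrow> lt (xs ! j) (xs ! a)" "lt (xs ! a) s" for a s
    using that trans in_S by (metis (no_types, lifting) L_def mem_Collect_eq)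
  have below_U: "\<forall>j\<in>U. lt s (xs ! j)"
    if "s \<in> S" "b \<in> U" "\<forall>j\<in>U. j \<noteq> b \<longrightarrow> lt (xs ! b) (xs ! j)" "lt s (xs ! b)" for b s
    using that trans in_S by (metis (no_types, lifting) U_def mem_Collect_eq)
  have "\<exists>s\<in>S. (\<forall>j\<in>L. lt (xs ! j) s) \<and> (\<forall>j\<in>U. lt s (xs ! j))"
  proof (cases "L = {}"; cases "U = {}")
    assume "L = {}" "U = {}"
    then show ?thesis
      using nonempty by blast
  next
    assume "L = {}" "U \<noteq> {}"
    then obtain b where "b \<in> U" "\<forall>j\<in>U. j \<noteq> b \<longrightarrow> lt (xs ! b) (xs ! j)"
      using U_min by blast
    moreover obtain s where "s \<in> S" "lt s (xs ! b)"
      using no_bot in_S calculation(1) by (auto simp: U_def)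
    ultimately show ?thesis
      using below_U \<open>L = {}\<close> by blast
  next
    assume "L \<noteq> {}" "U = {}"
    then obtain a where "a \<in> L" "\<forall>j\<in>L. j \<noteq> a \<longrightarrow> lt (xs ! j) (xs ! a)"
      using L_max by blast
    moreover obtain s where "s \<in> S" "lt (xs ! a) s"
      using no_top in_S calculation(1) by (auto simp: L_def)
    ultimately show ?thesis
      using above_L \<open>U = {}\<close> by blast
  next
    assume "L \<noteq> {}" "U \<noteq> {}"
    then obtain a b where a: "a \<in> L" "\<forall>j\<in>L. j \<noteq> a \<longrightarrow> lt (xs ! j) (xs ! a)"
      and b: "b \<in> U" "\<forall>j\<in>U. j \<noteq> b \<longrightarrow> lt (xs ! b) (xs ! j)"
      using L_max U_min by blast
    moreover obtain s where "s \<in> S" "lt (xs ! a) s" "lt s (xs ! b)"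
      using dense[OF _ _ LU[OF a(1) b(1)]] in_S a(1) b(1) by (auto simp: L_def U_def)
    ultimately show ?thesis
      using above_L below_U by blast
  qed
  then obtain s where "s \<in> S" "\<forall>j\<in>L. lt (xs ! j) s" "\<forall>j\<in>U. lt s (xs ! j)"
    by blast
  then have "forth_fits r xs s"
    unfolding forth_fits_def L_def U_def k_def by blast
  then show ?thesis ..
qed

lemma forth_seq_invariant:
  assumes "inj r"
  shows "set (forth_seq r k) \<subseteq> S \<and>
    (\<forall>i<k. \<forall>j<k. r i < r j \<longrightarrow> lt (forth_seq r k ! i) (forth_seq r k ! j))"
proof (induction k)
  case (Suc k)
  define xs where "xs = forth_seq r k"
  define s where "s = (SOME s. forth_fits r xs s)"
  have "forth_fits r xs s"
    unfolding s_def using forth_step[OF assms] Suc.IH by (simp add: xs_def someI_ex)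
  then have "s \<in> S" "\<forall>j<k. (r j < r k \<longrightarrow> lt (xs ! j) s) \<and> (r k < r j \<longrightarrow> lt s (xs ! j))"
    by (simp_all add: forth_fits_def xs_def)
  moreover have "forth_seq r (Suc k) = xs @ [s]"
    by (simp add: xs_def s_def)
  ultimately show ?case
    using Suc.IH by (auto simp: nth_append less_Suc_eq xs_def)
qed simp

theorem rat_embeds:
  obtains g :: "rat \<Rightarrow> 'c" where "range g \<subseteq> S" "\<And>p q. p < q \<Longrightarrow> lt (g p) (g q)"
proof -
  obtain e :: "rat \<Rightarrow> nat" where "bij e"
    using countableE_infinite[of "UNIV :: rat set"] infinite_UNIV_char_0 by auto
  define r where "r = inv e"
  have "bij r"
    unfolding r_def by (rule bij_imp_bij_inv[OF \<open>bij e\<close>])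
  define g where "g q = forth_seq r (Suc (e q)) ! e q" for q
  have g_nth: "g q = forth_seq r k ! e q" if "e q < k" for q k
    using forth_seq_nth[OF that] by (simp add: g_def)
  have r_e: "r (e q) = q" for q
    unfolding r_def by (simp add: \<open>bij e\<close> bij_is_inj)
  show thesis
  proof
    show "range g \<subseteq> S"
    proof
      fix x assume "x \<in> range g"
      then obtain q where "x = forth_seq r (Suc (e q)) ! e q"
        by (auto simp: g_def)
      then have "x \<in> set (forth_seq r (Suc (e q)))"
        using nth_mem[of "e q" "forth_seq r (Suc (e q))"] by (simp del: forth_seq.simps)
      then show "x \<in> S"
        using forth_seq_invariant[OF bij_is_inj[OF \<open>bij r\<close>]] by blast
    qed
    show "lt (g p) (g q)" if "p < q" for p q
    proof -
      define N where "N = Suc (max (e p) (e q))"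
      have "e p < N" "e q < N"
        by (auto simp: N_def)
      then have "lt (forth_seq r N ! e p) (forth_seq r N ! e q)"
        using forth_seq_invariant[OF bij_is_inj[OF \<open>bij r\<close>], of N] that by (simp add: r_e)
      then show ?thesis
        using g_nth \<open>e p < N\<close> \<open>e q < N\<close> by simp
    qed
  qed
qed

end

lemma order_scattered_insert:
  assumes "order_scattered \<X> (\<subseteq>)"
  shows "order_scattered (insert A \<X>) (\<subseteq>)"
  unfolding order_scattered_subset_iff
proof
  assume "\<exists>g :: rat \<Rightarrow> _. range g \<subseteq> insert A \<X> \<and> strict_mono g"
  then obtain g :: "rat \<Rightarrow> _" where g: "range g \<subseteq> insert A \<X>" "strict_mono g"
    by blast
  obtain q0 where q0: "\<And>q. q < q0 \<Longrightarrow> g q \<noteq> A"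
  proof (cases "A \<in> range g")
    case True
    then obtain q1 where "g q1 = A"
      by auto
    then show ?thesis
      using that[of q1] strict_monoD[OF g(2)] by blast
  qed (use that in auto)
  have "dense_unbounded {q. q < q0} (<)"
  proof unfold_locales
    show "\<exists>z\<in>{q. q < q0}. x < z \<and> z < y" if "y \<in> {q. q < q0}" "x < y" for x y
    proof -
      obtain z where "x < z" "z < y"
        using dense[OF \<open>x < y\<close>] by blast
      then show ?thesis
        using that by (intro bexI[of _ z]) auto
    qed
    show "\<exists>y\<in>{q. q < q0}. x < y" if "x \<in> {q. q < q0}" for x
      using dense[of x q0] that by auto
    show "\<exists>y\<in>{q. q < q0}. y < x" if "x \<in> {q. q < q0}" for x
      using that by (intro bexI[of _ "x - 1"]) auto
    have "q0 - 1 \<in> {q. q < q0}"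
      by simp
    then show "{q. q < q0} \<noteq> {}"
      by blast
  qed auto
  then obtain h :: "rat \<Rightarrow> rat" where h: "range h \<subseteq> {q. q < q0}" "\<And>p q. p < q \<Longrightarrow> h p < h q"
    using dense_unbounded.rat_embeds by blast
  have "range (g \<circ> h) \<subseteq> \<X>"
  proof
    fix x assume "x \<in> range (g \<circ> h)"
    then obtain p where "x = g (h p)"
      by auto
    moreover have "h p < q0"
      using h(1) by auto
    ultimately show "x \<in> \<X>"
      using g(1) q0[of "h p"] rangeI[of g "h p"] by blast
  qed
  moreover have "strict_mono (g \<circ> h)"
    using strict_monoD[OF g(2)] h(2) by (simp add: strict_mono_def)
  ultimately show False
    using assms unfolding order_scattered_subset_iff by blast
qed

lemma rat_interval_embedding:
  obtains lo hi :: "rat \<Rightarrow> rat" where "\<And>q. lo q < hi q" "\<And>p q. p < q \<Longrightarrow> hi p < lo q"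
proof -
  have "dense_unbounded {x :: rat \<times> rat. fst x < snd x} (\<lambda>x y. snd x < fst y)"
  proof unfold_locales
    have "(0, 1) \<in> {x :: rat \<times> rat. fst x < snd x}"
      by simp
    then show "{x :: rat \<times> rat. fst x < snd x} \<noteq> {}"
      by blast
    show "\<exists>z\<in>{x. fst x < snd x}. snd x < fst z \<and> snd z < fst y" if "snd x < fst y" for x y :: "rat \<times> rat"
      using that by (intro bexI[of _ "(snd x + (fst y - snd x) / 3, snd x + 2 * (fst y - snd x) / 3)"])
        (auto simp: field_simps)
    show "\<exists>y\<in>{x. fst x < snd x}. snd x < fst y" for x :: "rat \<times> rat"
      by (intro bexI[of _ "(snd x + 1, snd x + 2)"]) auto
    show "\<exists>y\<in>{x. fst x < snd x}. snd y < fst x" for x :: "rat \<times> rat"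
      by (intro bexI[of _ "(fst x - 2, fst x - 1)"]) auto
  qed auto
  then obtain g :: "rat \<Rightarrow> rat \<times> rat"
    where "range g \<subseteq> {x. fst x < snd x}" "\<And>p q. p < q \<Longrightarrow> snd (g p) < fst (g q)"
    using dense_unbounded.rat_embeds by blast
  then show thesis
    using that[of "fst \<circ> g" "snd \<circ> g"] by auto
qed

lemma set_closure_psubset_between:
  assumes "chain\<^sub>\<subseteq> \<X>" "A \<in> set_closure \<X>" "A' \<in> set_closure \<X>" "A'' \<in> set_closure \<X>"
    and "A \<subset> A'" "A' \<subset> A''"
  obtains B where "B \<in> \<X>" "A \<subset> B" "B \<subset> A''"
proof -
  obtain x y where "x \<in> A'" "x \<notin> A" "y \<in> A''" "y \<notin> A'"
    using assms(5,6) by blast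
  obtain B where B: "B \<in> \<X>" "x \<in> B" "y \<notin> B"
    using set_closure_separate[OF assms(3) \<open>x \<in> A'\<close> \<open>y \<notin> A'\<close>] .
  have "chain\<^sub>\<subseteq> (set_closure \<X>)" "B \<in> set_closure \<X>"
    using chain_set_closure[OF assms(1)] subset_set_closure B(1) by blast+
  then have "A \<subseteq> B \<or> B \<subseteq> A" "A'' \<subseteq> B \<or> B \<subseteq> A''"
    using assms(2,4) unfolding chain_subset_def by blast+
  then show thesis
    using that B \<open>x \<notin> A\<close> \<open>y \<in> A''\<close> by blast
qed

lemma order_scattered_set_closure:
  assumes chain: "chain\<^sub>\<subseteq> \<X>" and scattered: "order_scattered \<X> (\<subseteq>)"
  shows "order_scattered (set_closure \<X>) (\<subseteq>)"
  unfolding order_scattered_subset_iff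
proof
  assume "\<exists>g :: rat \<Rightarrow> _. range g \<subseteq> set_closure \<X> \<and> strict_mono g"
  then obtain g :: "rat \<Rightarrow> _" where "range g \<subseteq> set_closure \<X>" "strict_mono g"
    by blast
  then have g: "range g \<subseteq> set_closure \<X>" "\<And>p q. p < q \<Longrightarrow> g p \<subset> g q"
    by (simp_all add: strict_monoD)
  obtain lo hi :: "rat \<Rightarrow> rat" where lo_hi: "\<And>q. lo q < hi q" "\<And>p q. p < q \<Longrightarrow> hi p < lo q"
    using rat_interval_embedding by blast
  have between: "\<exists>B. B \<in> \<X> \<and> g (lo q) \<subset> B \<and> B \<subset> g (hi q)" for q
  proof -
    obtain m where m: "lo q < m" "m < hi q"
      using dense[OF lo_hi(1)] by blast
    have g_cl: "g p \<in> set_closure \<X>" for p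
      using g(1) by blast
    obtain B where "B \<in> \<X>" "g (lo q) \<subset> B" "B \<subset> g (hi q)"
      using set_closure_psubset_between[OF chain g_cl g_cl g_cl g(2)[OF m(1)] g(2)[OF m(2)]] .
    then show ?thesis
      by blast
  qed
  obtain h where "\<forall>q. h q \<in> \<X> \<and> g (lo q) \<subset> h q \<and> h q \<subset> g (hi q)"
    using choice[of "\<lambda>q B. B \<in> \<X> \<and> g (lo q) \<subset> B \<and> B \<subset> g (hi q)"] between by blast
  then have h: "\<And>q. h q \<in> \<X>" "\<And>q. g (lo q) \<subset> h q" "\<And>q. h q \<subset> g (hi q)"
    by simp_all
  have "strict_mono h"
  proof
    show "h p \<subset> h q" if "p < q" for p q
      using h(2)[of q] h(3)[of p] g(2)[OF lo_hi(2)[OF that]] by blast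
  qed
  moreover have "range h \<subseteq> \<X>"
    using h(1) by blast
  ultimately show False
    using scattered unfolding order_scattered_subset_iff by blast
qed

definition covers :: "'b set set \<Rightarrow> 'b set \<Rightarrow> 'b set \<Rightarrow> bool" where
  "covers \<S> B A \<longleftrightarrow> B \<in> \<S> \<and> A \<in> \<S> \<and> B \<subset> A \<and> \<not> (\<exists>C\<in>\<S>. B \<subset> C \<and> C \<subset> A)"

text \<open>A member of a chain that is bounded on each side by a cover (or is an endpoint); these
  are exactly the members that the topology of \<open>2\<^sup>X\<close> isolates.\<close>
definition chain_isolated :: "'b set set \<Rightarrow> 'b set \<Rightarrow> bool" where
  "chain_isolated \<S> A \<longleftrightarrow> A \<in> \<S> \<and>
     ((\<forall>B\<in>\<S>. \<not> B \<subset> A) \<or> (\<exists>B. covers \<S> B A)) \<and> ((\<forall>B\<in>\<S>. \<not> A \<subset> B) \<or> (\<exists>B. covers \<S> A B))"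

lemma chain_isolated_isolated:
  assumes chain: "chain\<^sub>\<subseteq> \<S>" and iso: "chain_isolated \<S> A"
  obtains U where "openin cantor_top U" "U \<inter> chi ` \<S> = {chi A}"
proof -
  have A: "A \<in> \<S>"
    using iso by (simp add: chain_isolated_def)
  have cmp: "B \<subseteq> C \<or> C \<subseteq> B" if "B \<in> \<S>" "C \<in> \<S>" for B C
    using chain that unfolding chain_subset_def by blast
  obtain F where F: "finite F" "F \<subseteq> A" "\<And>B. B \<in> \<S> \<Longrightarrow> B \<subset> A \<Longrightarrow> \<not> F \<subseteq> B"
  proof (cases "\<forall>B\<in>\<S>. \<not> B \<subset> A")
    case False
    then obtain B0 where B0: "covers \<S> B0 A"
      using iso by (auto simp: chain_isolated_def)
    then obtain x where "x \<in> A" "x \<notin> B0"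
      by (auto simp: covers_def)
    moreover have "B \<subseteq> B0" if "B \<in> \<S>" "B \<subset> A" for B
      using cmp[OF that(1), of B0] B0 that by (auto simp: covers_def)
    ultimately show thesis
      using that[of "{x}"] by blast
  qed (use that[of "{}"] in auto)
  obtain G where G: "finite G" "G \<inter> A = {}" "\<And>B. B \<in> \<S> \<Longrightarrow> A \<subset> B \<Longrightarrow> G \<inter> B \<noteq> {}"
  proof (cases "\<forall>B\<in>\<S>. \<not> A \<subset> B")
    case False
    then obtain B0 where B0: "covers \<S> A B0"
      using iso by (auto simp: chain_isolated_def)
    then obtain y where "y \<in> B0" "y \<notin> A"
      by (auto simp: covers_def)
    moreover have "B0 \<subseteq> B" if "B \<in> \<S>" "A \<subset> B" for B
      using cmp[OF that(1), of B0] B0 that by (auto simp: covers_def)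
    ultimately show thesis
      using that[of "{y}"] by blast
  qed (use that[of "{}"] in auto)
  have eq: "B = A" if "B \<in> \<S>" "chi B \<in> cylinder F G" for B
  proof -
    have "F \<subseteq> B" "G \<inter> B = {}"
      using that(2) by simp_all
    then have "\<not> B \<subset> A" "\<not> A \<subset> B"
      using F(3)[OF that(1)] G(3)[OF that(1)] by blast+
    then show ?thesis
      using cmp[OF that(1) A] by blast
  qed
  have "cylinder F G \<inter> chi ` \<S> = {chi A}"
  proof
    show "cylinder F G \<inter> chi ` \<S> \<subseteq> {chi A}"
      using eq by blast
    show "{chi A} \<subseteq> cylinder F G \<inter> chi ` \<S>"
      using A F(2) G(2) by simp
  qed
  then show thesis
    using that openin_cylinder[OF F(1) G(1)] by blast
qed

text \<open>In a chain without isolated members, the members without a lower cover form a dense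
  subchain with at least two elements.\<close>
locale perfect_chain =
  fixes \<S> :: "'b set set"
  assumes chain: "chain\<^sub>\<subseteq> \<S>" and nonempty: "\<S> \<noteq> {}" and perfect: "\<And>A. \<not> chain_isolated \<S> A"
begin

definition limits :: "'b set set" where
  "limits = {A\<in>\<S>. \<not> (\<exists>B. covers \<S> B A)}"

lemma comparable: "B \<in> \<S> \<Longrightarrow> C \<in> \<S> \<Longrightarrow> B \<subseteq> C \<or> C \<subseteq> B"
  using chain unfolding chain_subset_def by blast

lemma covered_in_limits:
  assumes "covers \<S> B A"
  shows "B \<in> limits"
proof -
  have "B \<in> \<S>"
    using assms by (simp add: covers_def)
  moreover have "\<not> covers \<S> C B" for C
    using perfect[of B] assms \<open>B \<in> \<S>\<close> unfolding chain_isolated_def by blast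
  ultimately show ?thesis
    by (simp add: limits_def)
qed

lemma below_cover: "covers \<S> C' C \<Longrightarrow> A \<in> \<S> \<Longrightarrow> A \<subset> C \<Longrightarrow> A \<subseteq> C'"
  using comparable[of A C'] by (auto simp: covers_def)

lemma strictly_between: "A \<in> \<S> \<Longrightarrow> A' \<in> \<S> \<Longrightarrow> A \<subset> A' \<Longrightarrow> \<not> covers \<S> A A' \<Longrightarrow> \<exists>C\<in>\<S>. A \<subset> C \<and> C \<subset> A'"
  by (auto simp: covers_def)

lemma limits_between:
  assumes "A \<in> limits" "C \<in> \<S>" "A \<subset> C" "C \<subset> A'" "\<not> covers \<S> A C"
  shows "\<exists>E\<in>limits. A \<subset> E \<and> E \<subset> A'"
proof (cases "C \<in> limits")
  case False
  then obtain C' where C': "covers \<S> C' C"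
    using assms(2) by (auto simp: limits_def)
  have "A \<subseteq> C'"
    using below_cover[OF C'] assms(1,3) by (auto simp: limits_def)
  moreover have "A \<noteq> C'"
    using C' assms(5) by blast
  moreover have "C' \<subset> A'"
    using C' assms(4) by (auto simp: covers_def)
  ultimately show ?thesis
    using covered_in_limits[OF C'] by blast
qed (use assms in blast)

lemma limits_dense:
  assumes A: "A \<in> limits" and A': "A' \<in> limits" and "A \<subset> A'"
  shows "\<exists>E\<in>limits. A \<subset> E \<and> E \<subset> A'"
proof -
  have A_in: "A \<in> \<S>" and A'_in: "A' \<in> \<S>" and "\<not> covers \<S> A A'"
    using A A' by (simp_all add: limits_def)
  then obtain C where C: "C \<in> \<S>" "A \<subset> C" "C \<subset> A'"
    using strictly_between[OF A_in A'_in \<open>A \<subset> A'\<close>] by blast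
  show ?thesis
  proof (cases "covers \<S> A C")
    case True
    then have no_upper: "\<not> covers \<S> C D" for D
      using perfect[of C] C(1) unfolding chain_isolated_def by blast
    then obtain D where D: "D \<in> \<S>" "C \<subset> D" "D \<subset> A'"
      using strictly_between[OF C(1) A'_in C(3)] by blast
    have "\<exists>E\<in>limits. C \<subset> E \<and> E \<subset> A'"
    proof (cases "D \<in> limits")
      case False
      then obtain D' where D': "covers \<S> D' D"
        using D(1) by (auto simp: limits_def)
      have "C \<noteq> D'"
        using no_upper[of D] D' by blast
      then have "C \<subset> D'"
        using below_cover[OF D' C(1) D(2)] by blast
      moreover have "D' \<subset> A'"
        using D' D(3) unfolding covers_def by blast
      ultimately show ?thesis
        using covered_in_limits[OF D'] by blast
    qed (use D in blast)
    then show ?thesis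
      using C(2) by blast
  qed (use limits_between[OF A C] in blast)
qed

lemma limits_two: "\<exists>a\<in>limits. \<exists>b\<in>limits. a \<subset> b"
proof -
  obtain A where A: "A \<in> \<S>"
    using nonempty by blast
  have lower: "\<exists>Y\<in>limits. Y \<subseteq> X \<and> (X \<notin> limits \<longrightarrow> covers \<S> Y X)" if X: "X \<in> \<S>" for X
  proof (cases "X \<in> limits")
    case False
    then obtain Y where "covers \<S> Y X"
      using X by (auto simp: limits_def)
    moreover from this have "Y \<subseteq> X"
      by (simp add: covers_def less_imp_le)
    ultimately show ?thesis
      using covered_in_limits by blast
  qed blast
  consider "\<exists>B\<in>\<S>. B \<subset> A" "\<not> (\<exists>B. covers \<S> B A)" | "\<exists>B\<in>\<S>. A \<subset> B" "\<not> (\<exists>B. covers \<S> A B)"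
    using perfect[of A] A unfolding chain_isolated_def by blast
  then show ?thesis
  proof cases
    case 1
    then obtain B Y where "B \<in> \<S>" "B \<subset> A" "Y \<in> limits" "Y \<subseteq> B"
      using lower by blast
    moreover have "A \<in> limits"
      using 1(2) A by (simp add: limits_def)
    moreover have "Y \<subset> A"
      using calculation(2,4) by (rule subset_psubset_trans[rotated])
    ultimately show ?thesis
      by blast
  next
    case 2
    then obtain B where B: "B \<in> \<S>" "A \<subset> B"
      by blast
    moreover have "\<not> covers \<S> A B"
      using 2(2) by blast
    ultimately obtain C where C: "C \<in> \<S>" "A \<subset> C" "C \<subset> B"
      using strictly_between[OF A] by meson
    obtain YA where YA: "YA \<in> limits" "YA \<subseteq> A"
      using lower[OF A] by blast
    show ?thesis
    proof (cases "B \<in> limits")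
      case True
      moreover have "YA \<subset> B"
        using YA(2) B(2) by (rule subset_psubset_trans)
      ultimately show ?thesis
        using YA(1) by blast
    next
      case False
      then obtain YB where "YB \<in> limits" "covers \<S> YB B"
        using lower[OF B(1)] by blast
      moreover have "A \<subset> YB"
        using below_cover[OF calculation(2) C(1) C(3)] C(2) by blast
      moreover have "YA \<subset> YB"
        using YA(2) \<open>A \<subset> YB\<close> by (rule subset_psubset_trans)
      ultimately show ?thesis
        using YA(1) by blast
    qed
  qed
qed

lemma embeds_rat:
  obtains g :: "rat \<Rightarrow> 'b set" where "range g \<subseteq> \<S>" "strict_mono g"
proof -
  obtain a b where ab: "a \<in> limits" "b \<in> limits" "a \<subset> b"
    using limits_two by blast
  define I where "I = {E\<in>limits. a \<subset> E \<and> E \<subset> b}"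
  have I_iff: "E \<in> I \<longleftrightarrow> E \<in> limits \<and> a \<subset> E \<and> E \<subset> b" for E
    by (simp add: I_def)
  have "dense_unbounded I (\<subset>)"
  proof
    obtain E where "E \<in> limits" "a \<subset> E" "E \<subset> b"
      using limits_dense[OF ab] by blast
    then show "I \<noteq> {}"
      using I_iff by blast
    show "\<exists>z\<in>I. x \<subset> z \<and> z \<subset> y" if xI: "x \<in> I" and yI: "y \<in> I" and xy: "x \<subset> y" for x y
    proof -
      have x: "x \<in> limits" "a \<subset> x" and y: "y \<in> limits" "y \<subset> b"
        using xI yI I_iff by blast+
      obtain E where "E \<in> limits" "x \<subset> E" "E \<subset> y"
        using limits_dense[OF x(1) y(1) xy] by blast
      moreover have "a \<subset> E" "E \<subset> b"
        using x(2) y(2) calculation(2,3) psubset_trans by blast+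
      ultimately show ?thesis
        using I_iff by blast
    qed
    show "\<exists>y\<in>I. x \<subset> y" if xI: "x \<in> I" for x
    proof -
      have x: "x \<in> limits" "a \<subset> x" "x \<subset> b"
        using xI I_iff by blast+
      obtain E where "E \<in> limits" "x \<subset> E" "E \<subset> b"
        using limits_dense[OF x(1) ab(2) x(3)] by blast
      moreover have "a \<subset> E"
        using x(2) calculation(2) psubset_trans by blast
      ultimately show ?thesis
        using I_iff by blast
    qed
    show "\<exists>y\<in>I. y \<subset> x" if xI: "x \<in> I" for x
    proof -
      have x: "x \<in> limits" "a \<subset> x" "x \<subset> b"
        using xI I_iff by blast+
      obtain E where "E \<in> limits" "a \<subset> E" "E \<subset> x"
        using limits_dense[OF ab(1) x(1) x(2)] by blast
      moreover have "E \<subset> b"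
        using x(3) calculation(3) psubset_trans by blast
      ultimately show ?thesis
        using I_iff by blast
    qed
  qed auto
  then obtain g :: "rat \<Rightarrow> 'b set" where "range g \<subseteq> I" "\<And>p q. p < q \<Longrightarrow> g p \<subset> g q"
    using dense_unbounded.rat_embeds by blast
  moreover have "I \<subseteq> \<S>"
    by (auto simp: I_def limits_def)
  ultimately show thesis
    using that[of g] strict_monoI[of g] by blast
qed

end

lemma top_scattered_chain:
  assumes chain: "chain\<^sub>\<subseteq> \<K>" and scattered: "order_scattered \<K> (\<subseteq>)"
  shows "top_scattered cantor_top (chi ` \<K>)"
  unfolding top_scattered_def
proof (intro allI impI)
  fix \<T> assume "\<T> \<subseteq> chi ` \<K>" "\<T> \<noteq> {}"
  then obtain \<S> where \<S>: "\<S> \<subseteq> \<K>" "\<T> = chi ` \<S>" "\<S> \<noteq> {}"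
    by (metis subset_imageE image_is_empty)
  have chain_\<S>: "chain\<^sub>\<subseteq> \<S>"
    using chain \<S>(1) unfolding chain_subset_def by blast
  show "\<exists>x\<in>\<T>. \<exists>U. openin cantor_top U \<and> U \<inter> \<T> = {x}"
  proof (cases "\<exists>A. chain_isolated \<S> A")
    case True
    then obtain A U where "chain_isolated \<S> A" "openin cantor_top U" "U \<inter> chi ` \<S> = {chi A}"
      using chain_isolated_isolated[OF chain_\<S>] by metis
    then show ?thesis
      using \<S>(2) by blast
  next
    case False
    interpret perfect_chain \<S>
      using chain_\<S> \<S>(3) False by unfold_locales auto
    obtain g :: "rat \<Rightarrow> _" where "range g \<subseteq> \<S>" "strict_mono g"
      using embeds_rat by blast
    then have "range g \<subseteq> \<K> \<and> strict_mono g"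
      using \<S>(1) by blast
    then show ?thesis
      using scattered unfolding order_scattered_subset_iff by blast
  qed
qed

definition lower_cut :: "(rat \<Rightarrow> 'b set) \<Rightarrow> rat \<Rightarrow> 'b set" where
  "lower_cut g q = \<Union>(g ` {..<q})"

lemma
  assumes "strict_mono g"
  shows lower_cut_strict_mono: "strict_mono (lower_cut g)"
    and lower_cut_in_set_closure: "lower_cut g q \<in> set_closure (range g)"
    and lower_cut_chain: "chain\<^sub>\<subseteq> (g ` {..<q})" "g ` {..<q} \<noteq> {}"
proof -
  have strict: "g p \<subset> g q" if "p < q" for p q
    using assms that by (rule strict_monoD)
  have mono: "g p \<subseteq> g q" if "p \<le> q" for p q
    using strict[of p q] that by (cases "p = q") auto
  show chain: "chain\<^sub>\<subseteq> (g ` {..<q})" for q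
    unfolding chain_subset_def by (metis image_iff linear mono)
  show ne: "g ` {..<q} \<noteq> {}" for q
  proof -
    have "q - 1 \<in> {..<q}"
      by simp
    then show ?thesis
      by blast
  qed
  show "lower_cut g q \<in> set_closure (range g)"
    unfolding lower_cut_def by (rule Union_chain_in_set_closure[OF chain ne]) auto
  show "strict_mono (lower_cut g)"
  proof
    fix p q :: rat assume pq: "p < q"
    obtain m where "p < m" "m < q"
      using dense[OF pq] by blast
    have "lower_cut g p \<subseteq> g p"
      unfolding lower_cut_def using mono less_imp_le by blast
    also have "g p \<subset> g m"
      using strict \<open>p < m\<close> by blast
    also have "g m \<subseteq> lower_cut g q"
      unfolding lower_cut_def using \<open>m < q\<close> by auto
    finally show "lower_cut g p \<subset> lower_cut g q" .
  qed
qed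

text \<open>No cut is isolated: a basic neighbourhood of \<open>lower_cut g q\<close> only sees finitely many
  points, which already lie in some \<open>g p\<close> with \<open>p < q\<close>, hence in every cut between \<open>p\<close> and \<open>q\<close>.\<close>
lemma lower_cuts_not_top_scattered:
  assumes strict: "strict_mono g"
  shows "\<not> top_scattered cantor_top (chi ` range (lower_cut g))"
proof
  assume "top_scattered cantor_top (chi ` range (lower_cut g))"
  moreover have "chi ` range (lower_cut g) \<noteq> {}"
    by blast
  ultimately obtain h U where "h \<in> chi ` range (lower_cut g)" "openin cantor_top U"
      "U \<inter> chi ` range (lower_cut g) = {h}"
    unfolding top_scattered_def by (meson order_refl)
  then obtain q where U: "openin cantor_top U" "U \<inter> chi ` range (lower_cut g) = {chi (lower_cut g q)}"
    by blast
  moreover from U(2) have "chi (lower_cut g q) \<in> U"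
    by blast
  ultimately obtain F G where FG: "finite F" "finite G" "chi (lower_cut g q) \<in> cylinder F G" "cylinder F G \<subseteq> U"
    using openin_cantor_topE by metis
  then have F: "F \<subseteq> \<Union>(g ` {..<q})" and G: "G \<inter> lower_cut g q = {}"
    by (simp_all add: lower_cut_def)
  have "subset.chain UNIV (g ` {..<q})"
    using lower_cut_chain(1)[OF strict] by (simp add: chain_subset_alt_def)
  then obtain B where "B \<in> g ` {..<q}" "F \<subseteq> B"
    using finite_subset_Union_chain[OF FG(1) F lower_cut_chain(2)[OF strict]] by blast
  then obtain p where "p < q" "F \<subseteq> g p"
    by auto
  obtain m where "p < m" "m < q"
    using dense[OF \<open>p < q\<close>] by blast
  have cut_m: "lower_cut g m \<subset> lower_cut g q"
    using lower_cut_strict_mono[OF strict] \<open>m < q\<close> by (rule strict_monoD)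
  have "g p \<subseteq> lower_cut g m"
    unfolding lower_cut_def using \<open>p < m\<close> by (intro UN_upper) simp
  with \<open>F \<subseteq> g p\<close> have "F \<subseteq> lower_cut g m"
    by (rule subset_trans)
  moreover have "G \<inter> lower_cut g m = {}"
    using G psubset_imp_subset[OF cut_m] by blast
  ultimately have "chi (lower_cut g m) \<in> U \<inter> chi ` range (lower_cut g)"
    using FG(4) by (simp add: subset_iff)
  then have "lower_cut g m = lower_cut g q"
    using U(2) by simp
  then show False
    using cut_m by simp
qed

lemma top_scattered_isolatedE:
  assumes "top_scattered T A" "S \<subseteq> A" "S \<noteq> {}"
  obtains x U where "x \<in> S" "openin T U" "U \<inter> S = {x}"
  using assms(1)[unfolded top_scattered_def, rule_format, OF assms(2,3)] by blast

lemma top_scattered_subset: "top_scattered T A \<Longrightarrow> B \<subseteq> A \<Longrightarrow> top_scattered T B"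
  unfolding top_scattered_def by (meson subset_trans)

lemma top_scattered_Times:
  assumes A: "top_scattered X A" and B: "top_scattered Y B"
  shows "top_scattered (prod_topology X Y) (A \<times> B)"
  unfolding top_scattered_def
proof (intro allI impI)
  fix S assume S: "S \<subseteq> A \<times> B" "S \<noteq> {}"
  then have "fst ` S \<subseteq> A" "fst ` S \<noteq> {}"
    by auto
  then obtain x U where x: "x \<in> fst ` S" "openin X U" "U \<inter> fst ` S = {x}"
    by (rule top_scattered_isolatedE[OF A])
  define Sx where "Sx = {y. (x, y) \<in> S}"
  have "Sx \<subseteq> B" "Sx \<noteq> {}"
    using S x(1) by (auto simp: Sx_def)
  then obtain y V where y: "y \<in> Sx" "openin Y V" "V \<inter> Sx = {y}"
    by (rule top_scattered_isolatedE[OF B])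
  have "(U \<times> V) \<inter> S \<subseteq> {(x, y)}"
  proof
    fix p assume p: "p \<in> (U \<times> V) \<inter> S"
    then have "fst p \<in> U \<inter> fst ` S"
      by (auto simp: mem_Times_iff)
    with x(3) have "fst p = x"
      by simp
    with p have "snd p \<in> V \<inter> Sx"
      by (auto simp: Sx_def mem_Times_iff)
    with y(3) have "snd p = y"
      by simp
    with \<open>fst p = x\<close> show "p \<in> {(x, y)}"
      by (simp add: prod_eq_iff)
  qed
  moreover have "(x, y) \<in> (U \<times> V) \<inter> S"
    using x y by (auto simp: Sx_def)
  ultimately have "(U \<times> V) \<inter> S = {(x, y)}"
    by blast
  moreover have "openin (prod_topology X Y) (U \<times> V)"
    using x(2) y(2) by (simp add: openin_prod_Times_iff)
  ultimately show "\<exists>p\<in>S. \<exists>W. openin (prod_topology X Y) W \<and> W \<inter> S = {p}"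
    using \<open>(x, y) \<in> (U \<times> V) \<inter> S\<close> by blast
qed

lemma image_Inter_closed_chain:
  assumes f: "continuous_map X Y f" and Y: "t1_space Y" and K: "compactin X K"
    and \<C>: "\<C> \<noteq> {}" "chain\<^sub>\<subseteq> \<C>" "\<And>Z. Z \<in> \<C> \<Longrightarrow> Z \<subseteq> K \<and> closedin X Z \<and> f ` Z = S"
  shows "f ` \<Inter>\<C> = S"
proof
  show "f ` \<Inter>\<C> \<subseteq> S"
    using \<C>(1,3) by blast
  show "S \<subseteq> f ` \<Inter>\<C>"
  proof
    fix y assume "y \<in> S"
    define \<U> where "\<U> = (\<lambda>Z. Z \<inter> {x \<in> topspace X. f x \<in> {y}}) ` \<C>"
    have "y \<in> topspace Y"
      using \<open>y \<in> S\<close> \<C> continuous_map_image_subset_topspace[OF f] closedin_subset by blast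
    then have "closedin X (Z \<inter> {x \<in> topspace X. f x \<in> {y}})" if "Z \<in> \<C>" for Z
      using \<C>(3)[OF that] closedin_continuous_map_preimage[OF f] Y t1_space_closedin_singleton
      by (metis closedin_Int)
    then have "\<forall>C\<in>\<U>. closedin X C"
      by (auto simp: \<U>_def)
    moreover have "K \<inter> \<Inter>\<F> \<noteq> {}" if \<F>: "finite \<F>" "\<F> \<subseteq> \<U>" for \<F>
    proof -
      obtain \<G> where \<G>: "finite \<G>" "\<G> \<subseteq> \<C>" "\<F> = (\<lambda>Z. Z \<inter> {x \<in> topspace X. f x \<in> {y}}) ` \<G>"
        using \<F> unfolding \<U>_def by (meson finite_subset_image)
      obtain Z where Z: "Z \<in> \<C>" "\<forall>Z'\<in>\<G>. Z \<subseteq> Z'"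
      proof (cases "\<G> = {}")
        case False
        have "chain\<^sub>\<subseteq> \<G>"
          using \<C>(2) \<G>(2) unfolding chain_subset_def by blast
        then have "\<Inter>\<G> \<in> \<G>"
          using Inter_in_chain[OF \<G>(1) False] by (simp add: chain_subset_alt_def)
        then show thesis
          using that[of "\<Inter>\<G>"] \<G>(2) Inter_lower by blast
      next
        case True
        then show thesis
          using that \<C>(1) by blast
      qed
      obtain x where "x \<in> Z" "f x = y"
        using \<C>(3)[OF Z(1)] \<open>y \<in> S\<close> by (metis imageE)
      moreover have "x \<in> topspace X"
        using \<C>(3)[OF Z(1)] calculation(1) closedin_subset by blast
      ultimately have "x \<in> K \<inter> \<Inter>\<F>"
        using \<C>(3)[OF Z(1)] Z(2) \<G>(3) by auto
      then show ?thesis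
        by blast
    qed
    ultimately have "K \<inter> \<Inter>\<U> \<noteq> {}"
      using K unfolding compactin_fip by blast
    then show "y \<in> f ` \<Inter>\<C>"
      using \<C>(1) by (auto simp: \<U>_def)
  qed
qed

lemma minimal_closed_subset_same_image:
  assumes f: "continuous_map X Y f" and Y: "t1_space Y" and K: "compactin X K" "closedin X K"
  obtains Z where "Z \<subseteq> K" "closedin X Z" "f ` Z = f ` K"
    "\<And>Z'. Z' \<subseteq> Z \<Longrightarrow> closedin X Z' \<Longrightarrow> f ` Z' = f ` K \<Longrightarrow> Z' = Z"
proof -
  define \<F> where "\<F> = {Z. Z \<subseteq> K \<and> closedin X Z \<and> f ` Z = f ` K}"
  have "\<exists>Z\<in>\<F>. \<forall>Z'\<in>\<F>. Z' \<subseteq> Z \<longrightarrow> Z' = Z"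
  proof (rule predicate_Zorn[where P = "\<lambda>Z Z'. Z' \<subseteq> Z"])
    show "partial_order_on \<F> (relation_of (\<lambda>Z Z'. Z' \<subseteq> Z) \<F>)"
      by (rule partial_order_on_relation_ofI) auto
    fix \<C> assume "\<C> \<in> Chains (relation_of (\<lambda>Z Z'. Z' \<subseteq> Z) \<F>)"
    then have "\<C> \<subseteq> \<F>" "chain\<^sub>\<subseteq> \<C>"
      unfolding Chains_def relation_of_def chain_subset_def by blast+
    show "\<exists>u\<in>\<F>. \<forall>Z\<in>\<C>. u \<subseteq> Z"
    proof (cases "\<C> = {}")
      case True
      then show ?thesis
        using K(2) by (auto simp: \<F>_def)
    next
      case False
      have "Z \<subseteq> K \<and> closedin X Z \<and> f ` Z = f ` K" if "Z \<in> \<C>" for Z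
        using \<open>\<C> \<subseteq> \<F>\<close> that by (auto simp: \<F>_def)
      then have "f ` \<Inter>\<C> = f ` K"
        by (rule image_Inter_closed_chain[OF f Y K(1) False \<open>chain\<^sub>\<subseteq> \<C>\<close>])
      moreover have "closedin X (\<Inter>\<C>)"
        using False \<open>\<C> \<subseteq> \<F>\<close> by (intro closedin_Inter) (auto simp: \<F>_def)
      moreover have "\<Inter>\<C> \<subseteq> K"
        using False \<open>\<C> \<subseteq> \<F>\<close> unfolding \<F>_def by blast
      ultimately have "\<Inter>\<C> \<in> \<F>"
        by (simp add: \<F>_def)
      then show ?thesis
        by blast
    qed
  qed
  then show thesis
    using that by (auto simp: \<F>_def)
qed

text \<open>A continuous image of a compact scattered set is scattered: a minimal closed subset mapping
  onto the closure of a given set has an isolated point, whose image is then isolated too.\<close>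
lemma top_scattered_image:
  assumes HX: "Hausdorff_space X" and HY: "Hausdorff_space Y" and f: "continuous_map X Y f"
    and A: "compactin X A" "top_scattered X A"
  shows "top_scattered Y (f ` A)"
  unfolding top_scattered_def
proof (intro allI impI)
  fix S assume S: "S \<subseteq> f ` A" "S \<noteq> {}"
  have "closedin Y (f ` A)"
    using compactin_imp_closedin[OF HY image_compactin[OF A(1) f]] .
  define S' where "S' = Y closure_of S"
  have S_S': "S \<subseteq> S'" and S'_fA: "S' \<subseteq> f ` A"
    using S(1) \<open>closedin Y (f ` A)\<close> closure_of_subset closure_of_minimal closedin_subset
    unfolding S'_def by (metis subset_trans)+
  define K where "K = A \<inter> {x \<in> topspace X. f x \<in> S'}"
  have "closedin X A"
    using compactin_imp_closedin[OF HX A(1)] .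
  then have K: "compactin X K" "closedin X K"
    using closedin_continuous_map_preimage[OF f, of S'] closed_compactin[OF A(1)]
    unfolding K_def S'_def by (auto intro: closedin_Int)
  have "f ` K = S'"
    using S'_fA compactin_subset_topspace[OF A(1)] by (auto simp: K_def)
  obtain Z where Z: "Z \<subseteq> K" "closedin X Z" "f ` Z = S'"
    and minimal: "\<And>Z'. Z' \<subseteq> Z \<Longrightarrow> closedin X Z' \<Longrightarrow> f ` Z' = f ` K \<Longrightarrow> Z' = Z"
    using minimal_closed_subset_same_image[OF f Hausdorff_imp_t1_space[OF HY] K] \<open>f ` K = S'\<close> by metis
  have "Z \<subseteq> A" "Z \<noteq> {}"
    using Z S_S' S(2) by (auto simp: K_def)
  then obtain z U where z: "z \<in> Z" "openin X U" "U \<inter> Z = {z}"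
    by (rule top_scattered_isolatedE[OF A(2)])
  define Z' where "Z' = Z - U"
  have "closedin X Z'"
    using Z(2) z(2) by (simp add: Z'_def closedin_diff)
  then have "f ` Z' \<noteq> S'"
    using minimal[of Z'] \<open>f ` K = S'\<close> z by (auto simp: Z'_def)
  then obtain w where "w \<in> Z" "f w \<notin> f ` Z'"
    using Z(3) by (auto simp: Z'_def)
  then have "w = z"
    using z(3) by (auto simp: Z'_def)
  define V where "V = topspace Y - f ` Z'"
  have "compactin X Z'"
    using closed_compactin[OF A(1) _ \<open>closedin X Z'\<close>] Z(1) by (auto simp: Z'_def K_def)
  then have "openin Y V"
    using compactin_imp_closedin[OF HY image_compactin[OF _ f]] by (simp add: V_def openin_diff)
  have "V \<inter> S' \<subseteq> {f z}"
    using Z(3) z(3) by (auto simp: V_def Z'_def)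
  moreover have "f z \<in> Y closure_of S"
    using Z(3) z(1) S'_def by blast
  moreover have "f z \<in> topspace Y"
    using closure_of_subset_topspace calculation(2) by (rule subsetD)
  then have "f z \<in> V"
    using \<open>f w \<notin> f ` Z'\<close> \<open>w = z\<close> by (simp add: V_def)
  moreover have "V \<inter> S \<noteq> {}"
    using \<open>f z \<in> Y closure_of S\<close> \<open>f z \<in> V\<close> \<open>openin Y V\<close> unfolding in_closure_of by blast
  ultimately have "V \<inter> S = {f z}"
    using S_S' by blast
  then show "\<exists>y\<in>S. \<exists>V. openin Y V \<and> V \<inter> S = {y}"
    using \<open>openin Y V\<close> by blast
qed

lemma Hausdorff_space_cantor_top: "Hausdorff_space cantor_top"
  unfolding cantor_top_def by (simp add: Hausdorff_space_product_topology)

lemma compact_space_cantor_top: "compact_space cantor_top"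
  unfolding cantor_top_def by (simp add: compact_space_product_topology compact_space_discrete_topology)

lemma continuous_map_cantor_inf:
  "continuous_map (prod_topology cantor_top cantor_top) (cantor_top :: ('b \<Rightarrow> bool) topology)
     (\<lambda>p. inf (fst p) (snd p))"
proof -
  let ?P = "prod_topology cantor_top cantor_top :: (('b \<Rightarrow> bool) \<times> ('b \<Rightarrow> bool)) topology"
  have proj: "continuous_map cantor_top (discrete_topology UNIV) (\<lambda>h. h k)" for k :: 'b
    unfolding cantor_top_def by (rule continuous_map_product_projection) simp
  have "continuous_map ?P (discrete_topology UNIV) (\<lambda>p. fst p k)"
    "continuous_map ?P (discrete_topology UNIV) (\<lambda>p. snd p k)" for k
    using continuous_map_compose[OF continuous_map_fst proj] continuous_map_compose[OF continuous_map_snd proj]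
    by (simp_all add: o_def)
  then have pair: "continuous_map ?P (discrete_topology UNIV) (\<lambda>p. (fst p k, snd p k))" for k
    unfolding prod_topology_discrete_topology[of UNIV UNIV, simplified] by (rule continuous_map_pairedI)
  have conj: "continuous_map (discrete_topology UNIV) (discrete_topology UNIV) (\<lambda>(a, b). a \<and> b)"
    by simp
  have "continuous_map ?P (discrete_topology UNIV) (\<lambda>p. fst p k \<and> snd p k)" for k
    using continuous_map_compose[OF pair conj] by (simp add: o_def)
  then show ?thesis
    unfolding cantor_top_def continuous_map_componentwise_UNIV by (simp add: inf_fun_def)
qed

definition meets :: "(nat \<Rightarrow> 'b set set) \<Rightarrow> nat \<Rightarrow> 'b set set" where
  "meets \<K> n = {(\<Inter>i<n. c i) | c. \<forall>i<n. c i \<in> \<K> i}"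

lemma meets_Suc: "meets \<K> (Suc n) = (\<lambda>p. fst p \<inter> snd p) ` (meets \<K> n \<times> \<K> n)"
proof (intro equalityI subsetI)
  fix A assume "A \<in> meets \<K> (Suc n)"
  then obtain c where "A = (\<Inter>i<Suc n. c i)" "\<forall>i<Suc n. c i \<in> \<K> i"
    by (auto simp: meets_def)
  then show "A \<in> (\<lambda>p. fst p \<inter> snd p) ` (meets \<K> n \<times> \<K> n)"
    by (intro image_eqI[of _ _ "(\<Inter>i<n. c i, c n)"]) (auto simp: meets_def lessThan_Suc)
next
  fix A assume "A \<in> (\<lambda>p. fst p \<inter> snd p) ` (meets \<K> n \<times> \<K> n)"
  then obtain c B where "A = (\<Inter>i<n. c i) \<inter> B" "\<forall>i<n. c i \<in> \<K> i" "B \<in> \<K> n"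
    by (auto simp: meets_def)
  then show "A \<in> meets \<K> (Suc n)"
    unfolding meets_def
    by (intro CollectI exI[of _ "c(n := B)"]) (auto simp: lessThan_Suc less_Suc_eq)
qed

lemma chi_Int: "chi (A \<inter> B) = inf (chi A) (chi B)"
  by (auto simp: chi_def)

lemma chi_image_Int_Times:
  "chi ` (\<lambda>p. fst p \<inter> snd p) ` (\<M> \<times> \<K>) = (\<lambda>p. inf (fst p) (snd p)) ` (chi ` \<M> \<times> chi ` \<K>)"
proof (intro equalityI subsetI)
  fix h assume "h \<in> chi ` (\<lambda>p. fst p \<inter> snd p) ` (\<M> \<times> \<K>)"
  then obtain A B where "A \<in> \<M>" "B \<in> \<K>" "h = inf (chi A) (chi B)"
    by (auto simp: chi_Int)
  then show "h \<in> (\<lambda>p. inf (fst p) (snd p)) ` (chi ` \<M> \<times> chi ` \<K>)"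
    by (intro image_eqI[of _ _ "(chi A, chi B)"]) auto
next
  fix h assume "h \<in> (\<lambda>p. inf (fst p) (snd p)) ` (chi ` \<M> \<times> chi ` \<K>)"
  then obtain A B where "A \<in> \<M>" "B \<in> \<K>" "h = chi (A \<inter> B)"
    by (auto simp: chi_Int)
  then show "h \<in> chi ` (\<lambda>p. fst p \<inter> snd p) ` (\<M> \<times> \<K>)"
    by (intro image_eqI[of _ _ "A \<inter> B"] image_eqI[of _ _ "(A, B)"]) auto
qed

lemma top_scattered_meets:
  assumes "\<And>i. i < n \<Longrightarrow> compactin cantor_top (chi ` \<K> i) \<and> top_scattered cantor_top (chi ` \<K> i)"
  shows "compactin cantor_top (chi ` meets \<K> n) \<and> top_scattered cantor_top (chi ` meets \<K> n)"
  using assms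
proof (induction n)
  case 0
  have "meets \<K> 0 = {UNIV}"
    by (simp add: meets_def)
  moreover have "top_scattered cantor_top {chi UNIV}"
    unfolding top_scattered_def
  proof (intro allI impI)
    fix S assume "S \<subseteq> {chi UNIV}" "S \<noteq> {}"
    then have "S = {chi UNIV}"
      by blast
    then show "\<exists>x\<in>S. \<exists>U. openin cantor_top U \<and> U \<inter> S = {x}"
      using openin_topspace[of cantor_top] by auto
  qed
  ultimately show ?case
    by simp
next
  case (Suc n)
  let ?P = "prod_topology cantor_top cantor_top :: (('b \<Rightarrow> bool) \<times> ('b \<Rightarrow> bool)) topology"
  have "compactin ?P (chi ` meets \<K> n \<times> chi ` \<K> n)" "top_scattered ?P (chi ` meets \<K> n \<times> chi ` \<K> n)"
    using Suc by (simp_all add: compactin_Times top_scattered_Times)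
  moreover have "Hausdorff_space ?P"
    by (simp add: Hausdorff_space_prod_topology Hausdorff_space_cantor_top)
  ultimately show ?case
    unfolding meets_Suc chi_image_Int_Times
    using image_compactin top_scattered_image Hausdorff_space_cantor_top continuous_map_cantor_inf by blast
qed

lemma top_scattered_meets_of_chains:
  assumes "\<And>i. i < n \<Longrightarrow> chain\<^sub>\<subseteq> (\<D> i) \<and> order_scattered (\<D> i) (\<subseteq>)"
  shows "top_scattered cantor_top (chi ` meets (\<lambda>i. set_closure (insert UNIV (\<D> i))) n)"
proof -
  have "compactin cantor_top (chi ` set_closure (insert UNIV (\<D> i)))" for i
    unfolding closure_of_chi_image[symmetric]
    by (rule closedin_compact_space[OF compact_space_cantor_top]) simp
  moreover have "top_scattered cantor_top (chi ` set_closure (insert UNIV (\<D> i)))" if "i < n" for i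
  proof -
    have "chain\<^sub>\<subseteq> (insert UNIV (\<D> i))" "order_scattered (insert UNIV (\<D> i)) (\<subseteq>)"
      using assms[OF that] order_scattered_insert unfolding chain_subset_def by blast+
    then show ?thesis
      by (intro top_scattered_chain chain_set_closure order_scattered_set_closure)
  qed
  ultimately show ?thesis
    using top_scattered_meets[of n "\<lambda>i. set_closure (insert UNIV (\<D> i))"] by blast
qed

lemma IdI:
  assumes "I \<noteq> {}" "\<And>x y. x \<in> I \<Longrightarrow> y \<le> x \<Longrightarrow> y \<in> I" "\<And>x y. x \<in> I \<Longrightarrow> y \<in> I \<Longrightarrow> sup x y \<in> I"
  shows "I \<in> Id"
  unfolding Id_def using assms by (auto intro: sup_ge1 sup_ge2)

lemma Id_nonempty: "I \<in> Id \<Longrightarrow> I \<noteq> {}"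
  unfolding Id_def by blast

lemma Id_downward: "I \<in> Id \<Longrightarrow> x \<in> I \<Longrightarrow> y \<le> x \<Longrightarrow> y \<in> I"
  unfolding Id_def by blast

lemma Id_directed: "I \<in> Id \<Longrightarrow> x \<in> I \<Longrightarrow> y \<in> I \<Longrightarrow> \<exists>z\<in>I. x \<le> z \<and> y \<le> z"
  by (simp add: Id_def)

lemma Id_sup_iff: "I \<in> Id \<Longrightarrow> sup x y \<in> I \<longleftrightarrow> x \<in> I \<and> y \<in> I"
  by (meson Id_directed Id_downward le_sup_iff sup_ge1 sup_ge2)

lemma atMost_in_Id: "{..y} \<in> Id"
  by (rule IdI) auto

lemma Union_chain_in_Id:
  assumes "chain\<^sub>\<subseteq> \<C>" "\<C> \<noteq> {}" "\<C> \<subseteq> Id"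
  shows "\<Union>\<C> \<in> Id"
proof (rule IdI)
  show "\<Union>\<C> \<noteq> {}"
    using assms(2,3) Id_nonempty by blast
  show "y \<in> \<Union>\<C>" if "x \<in> \<Union>\<C>" "y \<le> x" for x y
    using that assms(3) Id_downward by blast
  show "sup x y \<in> \<Union>\<C>" if xy: "x \<in> \<Union>\<C>" "y \<in> \<Union>\<C>" for x y
  proof -
    obtain I J where "I \<in> \<C>" "x \<in> I" "J \<in> \<C>" "y \<in> J"
      using xy by blast
    moreover have "I \<subseteq> J \<or> J \<subseteq> I"
      using assms(1) calculation unfolding chain_subset_def by blast
    ultimately show ?thesis
      using assms(3) Id_sup_iff by blast
  qed
qed

lemma mi_Delta_subset: "mi_Delta L \<subseteq> L"
  unfolding mi_Delta_def by blast

lemma maximal_ideal_avoiding: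
  assumes "I \<in> Id" "x \<notin> I"
  obtains M where "M \<in> Id" "I \<subseteq> M" "x \<notin> M" "\<And>J. J \<in> Id \<Longrightarrow> M \<subseteq> J \<Longrightarrow> x \<notin> J \<Longrightarrow> J = M"
proof -
  define \<F> where "\<F> = {J\<in>Id. I \<subseteq> J \<and> x \<notin> J}"
  have "\<exists>M\<in>\<F>. \<forall>J\<in>\<F>. M \<subseteq> J \<longrightarrow> J = M"
  proof (rule subset_Zorn_nonempty)
    show "\<F> \<noteq> {}"
      using assms by (auto simp: \<F>_def)
    fix \<C> assume "\<C> \<noteq> {}" "subset.chain \<F> \<C>"
    then have "chain\<^sub>\<subseteq> \<C>" "\<C> \<subseteq> \<F>"
      unfolding subset.chain_def chain_subset_def by blast+
    then have "\<Union>\<C> \<in> Id"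
      using Union_chain_in_Id[OF _ \<open>\<C> \<noteq> {}\<close>] by (auto simp: \<F>_def)
    then show "\<Union>\<C> \<in> \<F>"
      using \<open>\<C> \<noteq> {}\<close> \<open>\<C> \<subseteq> \<F>\<close> by (auto simp: \<F>_def)
  qed
  then show thesis
    using that by (auto simp: \<F>_def)
qed

text \<open>An ideal that is maximal among those avoiding \<open>x\<close> is completely meet-irreducible: every
  strictly larger ideal contains \<open>x\<close>, hence the ideal generated by it and \<open>x\<close>.\<close>
lemma mi_Delta_separates:
  assumes "I \<in> Id" "x \<notin> I"
  obtains M where "M \<in> mi_Delta Id" "I \<subseteq> M" "x \<notin> M"
proof -
  obtain M where M: "M \<in> Id" "I \<subseteq> M" "x \<notin> M"
    and maximal: "\<And>J. J \<in> Id \<Longrightarrow> M \<subseteq> J \<Longrightarrow> x \<notin> J \<Longrightarrow> J = M"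
    using maximal_ideal_avoiding[OF assms] by metis
  define M' where "M' = {y. \<exists>j\<in>M. y \<le> sup j x}"
  have "M' \<in> Id"
  proof (rule IdI)
    show "M' \<noteq> {}"
      using Id_nonempty[OF M(1)] by (auto simp: M'_def)
    show "y \<in> M'" if "z \<in> M'" "y \<le> z" for y z
      using that order_trans by (auto simp: M'_def)
    show "sup y z \<in> M'" if yz: "y \<in> M'" "z \<in> M'" for y z
    proof -
      obtain i j where "i \<in> M" "y \<le> sup i x" "j \<in> M" "z \<le> sup j x"
        using yz by (auto simp: M'_def)
      moreover from this have "sup y z \<le> sup (sup i j) x"
        by (meson le_sup_iff sup_ge1 sup_ge2 order_trans)
      ultimately show ?thesis
        using Id_sup_iff[OF M(1)] by (auto simp: M'_def)
    qed
  qed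
  moreover have "M \<subset> M'"
  proof -
    have "M \<subseteq> M'"
      unfolding M'_def using sup_ge1 by blast
    moreover have "x \<in> M'"
      using Id_nonempty[OF M(1)] unfolding M'_def using sup_ge2 by blast
    ultimately show ?thesis
      using M(3) by blast
  qed
  moreover have "M' \<subseteq> J" if "J \<in> Id" "M \<subset> J" for J
  proof
    fix y assume "y \<in> M'"
    then obtain j where "j \<in> M" "y \<le> sup j x"
      by (auto simp: M'_def)
    moreover have "x \<in> J"
      using maximal[OF that(1)] that(2) by blast
    ultimately show "y \<in> J"
      using that Id_sup_iff Id_downward by blast
  qed
  ultimately have "M \<in> mi_Delta Id"
    unfolding mi_Delta_def using M(1) by blast
  then show thesis
    using that M by blast
qed

text \<open>Set-valued coordinates that turn joins into unions, take values in scattered chains and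
  separate points give a join-embedding into scattered chains: each coordinate is read as the chain
  of its values, represented inside \<open>'a\<close> by chosen preimages.\<close>
lemma embeds_in_scattered_chains_from_set_coordinates:
  fixes v :: "nat \<Rightarrow> 'a::semilattice_sup \<Rightarrow> 'b set"
  assumes sup: "\<And>i x y. v i (sup x y) = v i x \<union> v i y"
    and chain: "\<And>i. i < k \<Longrightarrow> chain\<^sub>\<subseteq> (range (v i))"
    and scattered: "\<And>i. i < k \<Longrightarrow> order_scattered (range (v i)) (\<subseteq>)"
    and separating: "\<And>x y. x \<noteq> y \<Longrightarrow> \<exists>i<k. v i x \<noteq> v i y"
  shows "embeds_in_scattered_chains TYPE('a) k"
proof -
  define rep where "rep i x = (SOME y. v i y = v i x)" for i x
  have v_rep: "v i (rep i x) = v i x" for i x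
    unfolding rep_def by (rule someI_ex) blast
  have rep_eq: "v i x = v i y \<Longrightarrow> rep i x = rep i y" for i x y
    by (simp add: rep_def)
  define C where "C i = range (rep i)" for i
  define le where "le i a b \<longleftrightarrow> v i a \<subseteq> v i b" for i a b
  define f where "f x i = rep i x" for x i
  have "is_chain (C i) (le i)" if "i < k" for i
    unfolding is_chain_def
  proof (intro conjI ballI impI)
    fix a b assume "a \<in> C i" "b \<in> C i"
    then obtain x y where a: "a = rep i x" and b: "b = rep i y"
      by (auto simp: C_def)
    show "le i a b \<or> le i b a"
      using chain[OF that] unfolding le_def a b v_rep chain_subset_def by blast
    show "a = b" if "le i a b \<and> le i b a"
      using that rep_eq[of i x y] unfolding le_def a b v_rep by auto
  qed (auto simp: le_def)
  moreover have "f (sup x y) i = (if le i (f x i) (f y i) then f y i else f x i)" if "i < k" for x y i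
  proof (cases "v i x \<subseteq> v i y")
    case True
    then show ?thesis
      using rep_eq[of i "sup x y" y] sup[of i x y] by (auto simp: f_def le_def v_rep)
  next
    case False
    then have "v i y \<subseteq> v i x"
      using chain[OF that] unfolding chain_subset_def by blast
    then show ?thesis
      using False rep_eq[of i "sup x y" x] sup[of i x y] by (auto simp: f_def le_def v_rep)
  qed
  moreover have "x = y" if "\<forall>i<k. f x i = f y i" for x y
    using that separating v_rep by (metis f_def)
  ultimately have "join_embedding k C le f"
    unfolding join_embedding_def by (auto simp: C_def f_def)
  moreover have "order_scattered (C i) (le i)" if "i < k" for i
  proof -
    have "order_scattered (v i ` C i) (\<subseteq>)"
      using scattered[OF that] order_scattered_subset by blast
    show ?thesis
      unfolding order_scattered_def
    proof
      assume "\<exists>g :: rat \<Rightarrow> 'a. range g \<subseteq> C i \<and> (\<forall>p q. p \<le> q \<longleftrightarrow> le i (g p) (g q))"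
      then obtain g :: "rat \<Rightarrow> 'a" where "range g \<subseteq> C i" "\<forall>p q. p \<le> q \<longleftrightarrow> le i (g p) (g q)"
        by blast
      then have "range (v i \<circ> g) \<subseteq> v i ` C i \<and> (\<forall>p q. p \<le> q \<longleftrightarrow> (v i \<circ> g) p \<subseteq> (v i \<circ> g) q)"
        by (auto simp: le_def)
      then show False
        using \<open>order_scattered (v i ` C i) (\<subseteq>)\<close> unfolding order_scattered_def by blast
    qed
  qed
  ultimately show ?thesis
    unfolding embeds_in_scattered_chains_def by blast
qed

locale chain_join_embedding =
  fixes k :: nat and C :: "nat \<Rightarrow> 'c set" and le :: "nat \<Rightarrow> 'c \<Rightarrow> 'c \<Rightarrow> bool"
    and f :: "'a::semilattice_sup \<Rightarrow> nat \<Rightarrow> 'c"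
  assumes join_embedding: "join_embedding k C le f"
begin

lemma f_in_chain: "i < k \<Longrightarrow> f x i \<in> C i"
  using join_embedding unfolding join_embedding_def by blast

lemma chain: "i < k \<Longrightarrow> is_chain (C i) (le i)"
  using join_embedding unfolding join_embedding_def by blast

lemma le_refl: "i < k \<Longrightarrow> le i (f x i) (f x i)"
  using chain f_in_chain unfolding is_chain_def by blast

lemma le_antisym: "i < k \<Longrightarrow> le i (f x i) (f y i) \<Longrightarrow> le i (f y i) (f x i) \<Longrightarrow> f x i = f y i"
  using chain[of i] f_in_chain[of i] unfolding is_chain_def by blast

lemma le_trans: "i < k \<Longrightarrow> le i (f x i) (f y i) \<Longrightarrow> le i (f y i) (f z i) \<Longrightarrow> le i (f x i) (f z i)"
  using chain[of i] f_in_chain[of i] unfolding is_chain_def by blast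

lemma le_total: "i < k \<Longrightarrow> le i (f x i) (f y i) \<or> le i (f y i) (f x i)"
  using chain[of i] f_in_chain[of i] unfolding is_chain_def by blast

lemma f_sup: "i < k \<Longrightarrow> f (sup x y) i = (if le i (f x i) (f y i) then f y i else f x i)"
  using join_embedding unfolding join_embedding_def by blast

lemma f_inj: "(\<And>i. i < k \<Longrightarrow> f x i = f y i) \<Longrightarrow> x = y"
  using join_embedding unfolding join_embedding_def by blast

lemma f_mono: "x \<le> y \<Longrightarrow> i < k \<Longrightarrow> le i (f x i) (f y i)"
  using f_sup[of i x y] le_refl[of i x] by (metis sup.absorb2)

lemma le_coordinatewise:
  assumes "\<And>i. i < k \<Longrightarrow> le i (f x i) (f y i)"
  shows "x \<le> y"
proof -
  have "f (sup x y) i = f y i" if "i < k" for i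
    using f_sup[OF that] assms[OF that] by simp
  then have "sup x y = y"
    by (rule f_inj)
  then show ?thesis
    by (simp add: sup.absorb_iff2)
qed

text \<open>The points strictly below \<open>x\<close> in coordinate \<open>i\<close>; these ideals form a chain isomorphic
  to a subchain of \<open>C i\<close>.\<close>
definition below :: "nat \<Rightarrow> 'a \<Rightarrow> 'a set" where
  "below i x = {z. le i (f z i) (f x i) \<and> f z i \<noteq> f x i}"

lemma below_downward:
  assumes "i < k" "z \<in> below i x" "z' \<le> z"
  shows "z' \<in> below i x"
proof -
  have z'z: "le i (f z' i) (f z i)" and zx: "le i (f z i) (f x i)" "f z i \<noteq> f x i"
    using f_mono[OF assms(3,1)] assms(2) by (auto simp: below_def)
  have "le i (f z' i) (f x i)"
    using le_trans[OF assms(1) z'z zx(1)] .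
  moreover have "f z' i \<noteq> f x i"
    using le_antisym[OF assms(1) zx(1)] z'z zx(2) by force
  ultimately show ?thesis
    by (simp add: below_def)
qed

lemma below_in_Id:
  assumes "i < k" "below i x \<noteq> {}"
  shows "below i x \<in> Id"
proof (rule IdI)
  show "y \<in> below i x" if "z \<in> below i x" "y \<le> z" for y z
    using below_downward[OF assms(1) that] .
  show "sup y z \<in> below i x" if "y \<in> below i x" "z \<in> below i x" for y z
    using that f_sup[OF assms(1)] by (simp add: below_def)
qed (fact assms(2))

lemma below_mono:
  assumes "i < k" "le i (f x i) (f y i)"
  shows "below i x \<subseteq> below i y"
proof
  fix z assume "z \<in> below i x"
  then have "le i (f z i) (f x i)" "f z i \<noteq> f x i"
    by (auto simp: below_def)
  then show "z \<in> below i y"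
    using le_trans[OF assms(1) _ assms(2)] le_antisym[OF assms(1) _ assms(2)] by (auto simp: below_def)
qed

lemma chain_below: "i < k \<Longrightarrow> chain\<^sub>\<subseteq> (range (below i))"
  unfolding chain_subset_def using below_mono le_total by blast

lemma below_psubset:
  assumes "i < k" "below i x \<subset> below i y"
  shows "le i (f x i) (f y i) \<and> f x i \<noteq> f y i"
  using assms below_mono[OF assms(1), of y x] le_total[OF assms(1), of x y] by auto

lemma order_scattered_below:
  assumes "i < k" "order_scattered (C i) (le i)"
  shows "order_scattered (range (below i)) (\<subseteq>)"
  unfolding order_scattered_subset_iff
proof
  assume "\<exists>g :: rat \<Rightarrow> _. range g \<subseteq> range (below i) \<and> strict_mono g"
  then obtain g :: "rat \<Rightarrow> 'a set" where g: "range g \<subseteq> range (below i)" "strict_mono g"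
    by blast
  then have "\<forall>q. \<exists>y. g q = below i y"
    by blast
  then obtain x where x: "g q = below i (x q)" for q
    using choice[of "\<lambda>q y. g q = below i y"] by blast
  have strict: "le i (f (x p) i) (f (x q) i) \<and> f (x p) i \<noteq> f (x q) i" if "p < q" for p q
    using below_psubset[OF assms(1)] strict_monoD[OF g(2) that] unfolding x by blast
  have "p \<le> q \<longleftrightarrow> le i (f (x p) i) (f (x q) i)" for p q
    using strict[of p q] strict[of q p] le_refl[OF assms(1)] le_antisym[OF assms(1)]
    by (cases p q rule: linorder_cases) auto
  moreover have "range (\<lambda>q. f (x q) i) \<subseteq> C i"
    using f_in_chain[OF assms(1)] by blast
  ultimately show False
    using assms(2) unfolding order_scattered_def by blast
qed

lemma ideal_below_coordinate:
  assumes I: "I \<in> Id" and x: "x \<notin> I"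
  obtains i where "i < k" "I \<subseteq> below i x"
proof (rule ccontr)
  assume "\<not> thesis"
  then have "\<forall>i<k. \<exists>y\<in>I. y \<notin> below i x"
    using that by blast
  have "\<exists>y\<in>I. \<forall>i<j. y \<notin> below i x" if "j \<le> k" for j
    using that
  proof (induction j)
    case 0
    then show ?case
      using Id_nonempty[OF I] by blast
  next
    case (Suc j)
    then obtain y yj where "y \<in> I" "\<forall>i<j. y \<notin> below i x" "yj \<in> I" "yj \<notin> below j x"
      using \<open>\<forall>i<k. \<exists>y\<in>I. y \<notin> below i x\<close> by (metis Suc_le_lessD less_imp_le_nat)
    moreover obtain z where "z \<in> I" "y \<le> z" "yj \<le> z"
      using Id_directed[OF I] calculation by blast
    moreover have "z \<notin> below i x" if "i < Suc j" for i
    proof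
      assume "z \<in> below i x"
      moreover have "i < k"
        using that Suc.prems by simp
      ultimately have "y \<in> below i x" "yj \<in> below i x"
        using below_downward \<open>y \<le> z\<close> \<open>yj \<le> z\<close> by blast+
      then show False
        using that \<open>\<forall>i<j. y \<notin> below i x\<close> \<open>yj \<notin> below j x\<close> less_Suc_eq by blast
    qed
    ultimately show ?case
      by blast
  qed
  then obtain y where "y \<in> I" "\<forall>i<k. y \<notin> below i x"
    by blast
  then have "le i (f x i) (f y i)" if "i < k" for i
  proof (cases "le i (f y i) (f x i)")
    case True
    then have "f y i = f x i"
      using \<open>\<forall>i<k. y \<notin> below i x\<close> that by (simp add: below_def)
    then show ?thesis
      using le_refl[OF that, of x] by simp
  qed (use le_total[OF that, of x y] in blast)
  then have "x \<le> y"
    by (rule le_coordinatewise)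
  then show False
    using Id_downward[OF I \<open>y \<in> I\<close>] x by blast
qed

lemma mi_Delta_below:
  assumes "M \<in> mi_Delta Id"
  obtains i where "i < k" "M \<in> range (below i)"
proof -
  have "\<exists>M'\<in>Id. M \<subset> M' \<and> (\<forall>J\<in>Id. M \<subset> J \<longrightarrow> M' \<subseteq> J)"
    using assms by (simp add: mi_Delta_def)
  then obtain M' where M': "M' \<in> Id" "M \<subset> M'" "\<forall>J\<in>Id. M \<subset> J \<longrightarrow> M' \<subseteq> J"
    by (elim bexE conjE)
  have "M \<in> Id"
    using assms mi_Delta_subset by blast
  obtain x where "x \<in> M'" "x \<notin> M"
    using M'(2) by blast
  then obtain i where i: "i < k" "M \<subseteq> below i x"
    using ideal_below_coordinate[OF \<open>M \<in> Id\<close>] by metis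
  have "below i x \<in> Id"
    using below_in_Id[OF i(1)] Id_nonempty[OF \<open>M \<in> Id\<close>] i(2) by blast
  moreover have "x \<notin> below i x"
    by (simp add: below_def)
  ultimately have "\<not> M \<subset> below i x"
    using M'(3) \<open>x \<in> M'\<close> by (meson subsetD)
  then have "M = below i x"
    using i(2) by blast
  then show thesis
    using that i(1) by blast
qed

lemma Id_subset_meets: "Id \<subseteq> meets (\<lambda>i. set_closure (insert UNIV (range (below i)))) k"
proof
  fix I :: "'a set" assume I: "I \<in> Id"
  define c where "c i = \<Inter>{B \<in> insert UNIV (range (below i)). I \<subseteq> B}" for i
  have "c i \<in> set_closure (insert UNIV (range (below i)))" if "i < k" for i
  proof -
    have "chain\<^sub>\<subseteq> {B \<in> insert UNIV (range (below i)). I \<subseteq> B}"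
      using chain_below[OF that] unfolding chain_subset_def by blast
    then show ?thesis
      unfolding c_def by (rule Inter_chain_in_set_closure) auto
  qed
  moreover have "I = (\<Inter>i<k. c i)"
  proof
    show "I \<subseteq> (\<Inter>i<k. c i)"
      unfolding c_def by blast
    show "(\<Inter>i<k. c i) \<subseteq> I"
    proof
      fix x assume x: "x \<in> (\<Inter>i<k. c i)"
      show "x \<in> I"
      proof (rule ccontr)
        assume "x \<notin> I"
        then obtain i where "i < k" "I \<subseteq> below i x"
          using ideal_below_coordinate[OF I] by metis
        then have "c i \<subseteq> below i x"
          unfolding c_def by blast
        then show False
          using x \<open>i < k\<close> by (auto simp: below_def)
      qed
    qed
  qed
  ultimately show "I \<in> meets (\<lambda>i. set_closure (insert UNIV (range (below i)))) k"
    unfolding meets_def by blast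
qed

end

lemma top_scattered_Id_if_embeds:
  assumes "embeds_in_scattered_chains TYPE('a::semilattice_sup) k"
  shows "top_scattered cantor_top (chi ` (Id :: 'a set set))"
proof -
  obtain C :: "nat \<Rightarrow> 'a set" and le and f :: "'a \<Rightarrow> nat \<Rightarrow> 'a"
    where "join_embedding k C le f" and scattered: "\<forall>i<k. order_scattered (C i) (le i)"
    using assms unfolding embeds_in_scattered_chains_def by blast
  then interpret chain_join_embedding k C le f
    by unfold_locales
  have "top_scattered cantor_top (chi ` meets (\<lambda>i. set_closure (insert UNIV (range (below i)))) k)"
    using chain_below order_scattered_below scattered by (intro top_scattered_meets_of_chains) blast
  then show ?thesis
    using Id_subset_meets by (rule top_scattered_subset[OF _ image_mono])
qed

lemma order_scattered_Id_if_top_scattered: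
  assumes "top_scattered cantor_top (chi ` (Id :: 'a::semilattice_sup set set))"
  shows "order_scattered (Id :: 'a set set) (\<subseteq>)"
  unfolding order_scattered_subset_iff
proof
  assume "\<exists>g :: rat \<Rightarrow> 'a set. range g \<subseteq> Id \<and> strict_mono g"
  then obtain g :: "rat \<Rightarrow> 'a set" where g: "range g \<subseteq> Id" "strict_mono g"
    by blast
  have "lower_cut g q \<in> Id" for q
    unfolding lower_cut_def using lower_cut_chain[OF g(2)] g(1) by (intro Union_chain_in_Id) auto
  then have "chi ` range (lower_cut g) \<subseteq> chi ` Id"
    by blast
  then show False
    using lower_cuts_not_top_scattered[OF g(2)] top_scattered_subset[OF assms] by blast
qed

lemma order_scattered_mi_Delta_if_top_scattered_closure:
  assumes "top_scattered cantor_top (cantor_top closure_of (chi ` mi_Delta (Id :: 'a::semilattice_sup set set)))"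
  shows "order_scattered (mi_Delta (Id :: 'a set set)) (\<subseteq>)"
  unfolding order_scattered_subset_iff
proof
  assume "\<exists>g :: rat \<Rightarrow> 'a set. range g \<subseteq> mi_Delta Id \<and> strict_mono g"
  then obtain g :: "rat \<Rightarrow> 'a set" where g: "range g \<subseteq> mi_Delta Id" "strict_mono g"
    by blast
  have "range (lower_cut g) \<subseteq> set_closure (mi_Delta Id)"
    using lower_cut_in_set_closure[OF g(2)] set_closure_mono[OF g(1)] by blast
  then have "chi ` range (lower_cut g) \<subseteq> cantor_top closure_of (chi ` mi_Delta Id)"
    unfolding closure_of_chi_image by (rule image_mono)
  then show False
    using lower_cuts_not_top_scattered[OF g(2)] top_scattered_subset[OF assms] by blast
qed

context chain_join_embedding
begin

definition mi_part :: "nat \<Rightarrow> 'a set set" where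
  "mi_part i = mi_Delta Id \<inter> range (below i)"

lemma mi_Delta_eq_Union_mi_part: "mi_Delta (Id :: 'a set set) = (\<Union>i<k. mi_part i)"
proof (intro equalityI subsetI)
  fix M :: "'a set" assume "M \<in> mi_Delta Id"
  moreover obtain i where "i < k" "M \<in> range (below i)"
    using mi_Delta_below[OF calculation] .
  ultimately show "M \<in> (\<Union>i<k. mi_part i)"
    by (auto simp: mi_part_def)
qed (auto simp: mi_part_def)

lemma chain_mi_part: "i < k \<Longrightarrow> chain\<^sub>\<subseteq> (mi_part i)"
  using chain_below unfolding chain_subset_def mi_part_def by blast

lemma order_scattered_mi_part:
  "order_scattered (mi_Delta (Id :: 'a set set)) (\<subseteq>) \<Longrightarrow> order_scattered (mi_part i) (\<subseteq>)"
  by (erule order_scattered_subset) (simp add: mi_part_def)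

definition avoiding :: "nat \<Rightarrow> 'a \<Rightarrow> 'a set" where
  "avoiding i x = \<Union>{M \<in> mi_part i. x \<notin> M}"

lemma avoiding_sup: "avoiding i (sup x y) = avoiding i x \<union> avoiding i y"
proof -
  have "M \<in> Id" if "M \<in> mi_part i" for M
    using that mi_Delta_subset by (auto simp: mi_part_def)
  then have "{M \<in> mi_part i. sup x y \<notin> M} = {M \<in> mi_part i. x \<notin> M} \<union> {M \<in> mi_part i. y \<notin> M}"
    using Id_sup_iff by blast
  then show ?thesis
    unfolding avoiding_def by blast
qed

lemma chain_avoiding:
  assumes "i < k"
  shows "chain\<^sub>\<subseteq> (range (avoiding i))"
proof -
  have "{M \<in> mi_part i. x \<notin> M} \<subseteq> {M \<in> mi_part i. y \<notin> M} \<or> {M \<in> mi_part i. y \<notin> M} \<subseteq> {M \<in> mi_part i. x \<notin> M}"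
    for x y
    using chain_mi_part[OF assms] unfolding chain_subset_def by blast
  then show ?thesis
    unfolding chain_subset_def avoiding_def by blast
qed

lemma order_scattered_avoiding:
  assumes "i < k" "order_scattered (mi_Delta (Id :: 'a set set)) (\<subseteq>)"
  shows "order_scattered (range (avoiding i)) (\<subseteq>)"
proof -
  have chain: "chain\<^sub>\<subseteq> (insert {} (mi_part i))"
    using chain_mi_part[OF assms(1)] unfolding chain_subset_def by blast
  have "avoiding i x \<in> set_closure (insert {} (mi_part i))" for x
  proof (cases "{M \<in> mi_part i. x \<notin> M} = {}")
    case True
    then have "avoiding i x = {}"
      unfolding avoiding_def by (metis Union_empty)
    then show ?thesis
      using subset_set_closure by blast
  next
    case False
    have "chain\<^sub>\<subseteq> {M \<in> mi_part i. x \<notin> M}"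
      using chain_mi_part[OF assms(1)] unfolding chain_subset_def by blast
    then show ?thesis
      unfolding avoiding_def using False by (rule Union_chain_in_set_closure) blast
  qed
  moreover have "order_scattered (set_closure (insert {} (mi_part i))) (\<subseteq>)"
    using chain order_scattered_insert[OF order_scattered_mi_part[OF assms(2)]]
    by (rule order_scattered_set_closure)
  ultimately show ?thesis
    using order_scattered_subset by blast
qed

lemma avoiding_separates:
  assumes "\<not> x \<le> y"
  obtains i where "i < k" "avoiding i x \<noteq> avoiding i y"
proof -
  obtain M where M: "M \<in> mi_Delta Id" "{..y} \<subseteq> M" "x \<notin> M"
    using mi_Delta_separates[OF atMost_in_Id, of x y] assms by auto
  then obtain i where "i < k" "M \<in> mi_part i"
    using mi_Delta_eq_Union_mi_part by blast
  then have "M \<subseteq> avoiding i x"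
    using M(3) by (auto simp: avoiding_def)
  moreover have "y \<notin> avoiding i y"
    by (auto simp: avoiding_def)
  ultimately show thesis
    using that \<open>i < k\<close> M(2) by blast
qed

lemma embeds_if_order_scattered_mi_Delta:
  assumes "order_scattered (mi_Delta (Id :: 'a set set)) (\<subseteq>)"
  shows "embeds_in_scattered_chains TYPE('a) k"
proof (rule embeds_in_scattered_chains_from_set_coordinates)
  show "\<exists>i<k. avoiding i x \<noteq> avoiding i y" if "x \<noteq> y" for x y
    using that avoiding_separates antisym by metis
qed (use avoiding_sup chain_avoiding order_scattered_avoiding[OF _ assms] in auto)

lemma top_scattered_closure_if_order_scattered_mi_Delta:
  assumes "order_scattered (mi_Delta (Id :: 'a set set)) (\<subseteq>)"
  shows "top_scattered cantor_top (cantor_top closure_of (chi ` mi_Delta (Id :: 'a set set)))"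
proof -
  let ?\<K> = "\<lambda>i. set_closure (insert UNIV (mi_part i))"
  have "set_closure (mi_part i) \<subseteq> meets ?\<K> k" if "i < k" for i
  proof
    fix A assume "A \<in> set_closure (mi_part i)"
    define c where "c j = (if j = i then A else UNIV)" for j
    have "c j \<in> ?\<K> j" for j
      using \<open>A \<in> set_closure (mi_part i)\<close> set_closure_mono[of "mi_part i" "insert UNIV (mi_part i)"]
        subset_set_closure[of "insert UNIV (mi_part j)"] by (auto simp: c_def)
    moreover have "A = (\<Inter>j<k. c j)"
      using that by (auto simp: c_def)
    ultimately show "A \<in> meets ?\<K> k"
      unfolding meets_def by blast
  qed
  moreover have "chi ` mi_Delta Id = \<Union>((\<lambda>i. chi ` mi_part i) ` {..<k})"
    unfolding mi_Delta_eq_Union_mi_part by blast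
  then have "cantor_top closure_of (chi ` mi_Delta Id) = (\<Union>i<k. chi ` set_closure (mi_part i))"
    by (simp add: closure_of_Union image_image closure_of_chi_image)
  ultimately have "cantor_top closure_of (chi ` mi_Delta Id) \<subseteq> chi ` meets ?\<K> k"
    by blast
  moreover have "top_scattered cantor_top (chi ` meets ?\<K> k)"
    using chain_mi_part order_scattered_mi_part[OF assms] by (intro top_scattered_meets_of_chains) blast
  ultimately show ?thesis
    using top_scattered_subset by blast
qed

end

theorem theorem9p4:
  fixes n :: nat
  assumes "join_dim_eq TYPE('a::semilattice_sup) n"
  shows "(embeds_in_scattered_chains TYPE('a) n
          \<longleftrightarrow> (\<exists>k. embeds_in_scattered_chains TYPE('a) k))
       \<and> ((\<exists>k. embeds_in_scattered_chains TYPE('a) k)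
          \<longleftrightarrow> top_scattered cantor_top (chi ` (Id :: 'a set set)))
       \<and> (top_scattered cantor_top (chi ` (Id :: 'a set set))
          \<longleftrightarrow> order_scattered (Id :: 'a set set) (\<subseteq>))
       \<and> (order_scattered (Id :: 'a set set) (\<subseteq>)
          \<longleftrightarrow> order_scattered (mi_Delta (Id :: 'a set set)) (\<subseteq>))
       \<and> (order_scattered (mi_Delta (Id :: 'a set set)) (\<subseteq>)
          \<longleftrightarrow> top_scattered cantor_top (cantor_top closure_of (chi ` mi_Delta (Id :: 'a set set))))"
proof -
  obtain C :: "nat \<Rightarrow> 'a set" and le and f :: "'a \<Rightarrow> nat \<Rightarrow> 'a" where "join_embedding n C le f"
    using assms unfolding join_dim_eq_def embeds_in_chains_def by blast
  then interpret chain_join_embedding n C le f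
    by unfold_locales
  have "order_scattered (Id :: 'a set set) (\<subseteq>) \<Longrightarrow> order_scattered (mi_Delta (Id :: 'a set set)) (\<subseteq>)"
    using order_scattered_subset mi_Delta_subset by blast
  then show ?thesis
    using top_scattered_Id_if_embeds order_scattered_Id_if_top_scattered
      embeds_if_order_scattered_mi_Delta top_scattered_closure_if_order_scattered_mi_Delta
      order_scattered_mi_Delta_if_top_scattered_closure
    by blast
qed

end
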